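(* Assume (A1)–(A4) from the context. Let $T\ge 1$, and let the step sizes $\alpha,\beta>0$ satisfy $$0<\alpha(\rho+L)+4\alpha^2L^2\le \tfrac12 \qquad\text{and}\qquad 192(6+\delta)\beta^2K^2L^2\le 1,\qquad \text{where } \delta=\frac{1}{(1-\alpha\rho)^2}.$$ Then the iterates $z^0,\dots,z^{T-1}$ generated by FedCanon satisfy $$\frac{1}{T}\sum_{t=0}^{T-1}\mathbb{E}\Vert G^{\alpha}(z^{t})\Vert^2\le \frac{8\left[\phi(z^0)-\phi^*+\alpha\mathcal{E}^0\right]}{\alpha T}+\frac{50\sigma^2}{BK}+\frac{\sigma^2}{8B}+B_h .$$
   Context: Let $N,d,K,B$ be positive integers and $[N]=\{1,\dots,N\}$. For each client $i\in[N]$ let $f_i(x)=\mathbb{E}_{\xi\sim\mathcal{D}_i}[F_i(x;\xi)]$. Let $f=\frac1N\sum_{i=1}^N f_i$, let $h:\mathbb{R}^d\to\mathbb{R}\cup\{+\infty\}$, and let $\phi=f+h$. No similarity between the distributions $\mathcal{D}_i$ is assumed. Standing assumptions: (A1) $\phi^*:=\inf_z\phi(z)>-\infty$. (A2) There is $L>0$ such that for every $i$ and all $x,y$: $f_i(x)-f_i(y)-\langle\nabla f_i(y),x-y\rangle\le \frac L2\Vert x-y\Vert^2$ and $\Vert\nabla f_i(x)-\nabla f_i(y)\Vert\le L\Vert x-y\Vert$. (A3) $h$ is proper, closed and $\rho$-weakly convex for some $\rho\ge0$, i.e. $h(z)+\frac{\rho}{2}\Vert z\Vert^2$ is convex; it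 need not be smooth. There is a constant $B_h$ such that $\Vert h'(z)\Vert^2\le B_h$ for every $z$ and every subgradient $h'(z)\in\partial h(z)$. (A4) Whenever client $i$ evaluates a stochastic gradient $g_i(x)$, it draws $B$ fresh samples $\xi_{i,1},\dots,\xi_{i,B}\sim\mathcal{D}_i$, independent of everything drawn before, and sets $g_i(x)=\frac1B\sum_{b=1}^B\nabla F_i(x;\xi_{i,b})$. Conditionally on the past, $\mathbb{E}[g_i(x)]=\nabla f_i(x)$ and $\mathbb{E}\Vert g_i(x)-\nabla f_i(x)\Vert^2\le\sigma^2/B$. Proximal operator: $\mathbf{prox}_{\alpha h}\{y\}=\arg\min_x\{h(x)+\frac{1}{2\alpha}\Vert x-y\Vert^2\}$. Algorithm FedCanon. The inputs are step sizes $\alpha,\beta>0$, an initial point $z^0\in\mathbb{R}^d$, and control variables $c_i^0\in\mathbb{R}^d$ with $\sum_{i}c_i^0=\mathbf{0}_d$. For $t=0,1,\dots$: - every client $i$ sets $\hat x_i^{t,0}=z^t$; - for $k=0,\dots,K-1$ it updates $\hat x_i^{t,k+1}=\hat x_i^{t,k}-\beta[g_i(\hat x_i^{t,k})+c_i^t]$; - it forms $\Delta_i^{t+1}=\frac{1}{\beta K}(z^t-\hat x_i^{t,K})$; - the server computes $\bar\Delta^{t+1}=\frac1N\sum_i\Delta_i^{t+1}$ and $z^{t+1}=\mathbf{prox}_{\alpha h}\{z^t-\alpha\bar\Delta^{t+1}\}$; - every client updates $c_i^{t+1}=c_i^t+\bar\Delta^{t+1}-\Delta_i^{t+1}$. (The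 variant FedCanon II, in which every client applies the prox step locally starting from a common initialization, generates the same sequence.) Notation: - $G^{\alpha}(z,u)=\frac1\alpha\left(z-\mathbf{prox}_{\alpha h}\{z-\alpha u\}\right)$, and the proximal gradient is $G^\alpha(z)=G^\alpha(z,\nabla f(z))$. - $v_i^t=\frac1K\sum_{k=0}^{K-1}g_i(\hat x_i^{t,k})$ and $\bar v^t=\frac1N\sum_i v_i^t$. - $\mathcal{E}^t=\frac1N\sum_{i=1}^N\mathbb{E}\Vert\nabla f_i(z^t)+c_i^t-\nabla f(z^t)\Vert^2$. For $t\ge1$ this equals $\frac1N\sum_i\mathbb{E}\Vert\nabla f_i(\hat x_i^{t,0})-v_i^{t-1}-\nabla f(z^t)+\bar v^{t-1}\Vert^2$, since $c_i^t=\bar v^{t-1}-v_i^{t-1}$. - $\mathbb{E}$ denotes expectation over all sampling. *)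

theory Defs
  imports "HOL-Probability.Probability"
begin

definition proper_fun :: "('a \<Rightarrow> ereal) \<Rightarrow> bool" where
  "proper_fun h \<longleftrightarrow> (\<forall>x. h x \<noteq> -\<infinity>) \<and> (\<exists>x. h x \<noteq> \<infinity>)"

definition closed_fun :: "('a::topological_space \<Rightarrow> ereal) \<Rightarrow> bool" where
  "closed_fun h \<longleftrightarrow> closed {(x, r::real). h x \<le> ereal r}"

text \<open>Convexity of an extended-real-valued function (ereal arithmetic, 0 * \<infinity> = 0).\<close>
definition ereal_convex :: "('a::real_vector \<Rightarrow> ereal) \<Rightarrow> bool" where
  "ereal_convex g \<longleftrightarrow>
     (\<forall>x y u. 0 \<le> u \<and> u \<le> 1 \<longrightarrow>
        g ((1 - u) *\<^sub>R x + u *\<^sub>R y) \<le> ereal (1 - u) * g x + ereal u * g y)"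

definition weakly_convex :: "real \<Rightarrow> ('a::real_normed_vector \<Rightarrow> ereal) \<Rightarrow> bool" where
  "weakly_convex \<rho> h \<longleftrightarrow> ereal_convex (\<lambda>z. h z + ereal (\<rho> / 2 * (norm z)\<^sup>2))"

definition subdiff :: "('a::real_inner \<Rightarrow> ereal) \<Rightarrow> 'a \<Rightarrow> 'a set" where
  "subdiff h z = {v. \<bar>h z\<bar> \<noteq> \<infinity> \<and>
      (\<forall>\<epsilon>>0. \<exists>\<delta>>0. \<forall>y. norm (y - z) < \<delta> \<longrightarrow>
          h z + ereal (inner v (y - z) - \<epsilon> * norm (y - z)) \<le> h y)}"

text \<open>Proximal operator: a minimizer of h(x) + ||x - y||^2/(2 alpha)
  (unique under the step-size conditions of the theorem).\<close>
definition prox :: "('a::real_normed_vector \<Rightarrow> ereal) \<Rightarrow> real \<Rightarrow> 'a \<Rightarrow> 'a" where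
  "prox h \<alpha> y = (SOME x. \<forall>w. h x + ereal ((norm (x - y))\<^sup>2 / (2 * \<alpha>))
                              \<le> h w + ereal ((norm (w - y))\<^sup>2 / (2 * \<alpha>)))"

text \<open>G^alpha(z,u) and the proximal gradient G^alpha(z) = G^alpha(z, grad f(z)).\<close>
definition Gmap :: "('a::real_normed_vector \<Rightarrow> ereal) \<Rightarrow> real \<Rightarrow> 'a \<Rightarrow> 'a \<Rightarrow> 'a" where
  "Gmap h \<alpha> z u = (1 / \<alpha>) *\<^sub>R (z - prox h \<alpha> (z - \<alpha> *\<^sub>R u))"

fun local_iter :: "(nat \<Rightarrow> 'a \<Rightarrow> 'a) \<Rightarrow> real \<Rightarrow> 'a \<Rightarrow> 'a \<Rightarrow> nat \<Rightarrow> 'a::real_vector" where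
  "local_iter g \<beta> c z 0 = z"
| "local_iter g \<beta> c z (Suc k) = local_iter g \<beta> c z k - \<beta> *\<^sub>R (g k (local_iter g \<beta> c z k) + c)"

definition mb_grad :: "(nat \<Rightarrow> 'a \<Rightarrow> 'b \<Rightarrow> 'a::real_vector) \<Rightarrow> nat
    \<Rightarrow> (nat \<Rightarrow> nat \<Rightarrow> nat \<Rightarrow> nat \<Rightarrow> 'b) \<Rightarrow> nat \<Rightarrow> nat \<Rightarrow> nat \<Rightarrow> 'a \<Rightarrow> 'a" where
  "mb_grad gF B s t i k x = (1 / real B) *\<^sub>R (\<Sum>b<B. gF i x (s t i k b))"

text \<open>State (z^t, c^t) of FedCanon after t rounds, for a given realisation s of all samples.
  Clients are indexed by 0..<N.\<close>
primrec fedcanon :: "(nat \<Rightarrow> 'a \<Rightarrow> 'b \<Rightarrow> 'a::real_normed_vector) \<Rightarrow> ('a \<Rightarrow> ereal)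
    \<Rightarrow> nat \<Rightarrow> nat \<Rightarrow> nat \<Rightarrow> real \<Rightarrow> real \<Rightarrow> 'a \<Rightarrow> (nat \<Rightarrow> 'a)
    \<Rightarrow> (nat \<Rightarrow> nat \<Rightarrow> nat \<Rightarrow> nat \<Rightarrow> 'b) \<Rightarrow> nat \<Rightarrow> 'a \<times> (nat \<Rightarrow> 'a)" where
  "fedcanon gF h N K B \<alpha> \<beta> z0 c0 s 0 = (z0, c0)"
| "fedcanon gF h N K B \<alpha> \<beta> z0 c0 s (Suc t) =
     (let z = fst (fedcanon gF h N K B \<alpha> \<beta> z0 c0 s t);
          c = snd (fedcanon gF h N K B \<alpha> \<beta> z0 c0 s t);
          \<Delta> = (\<lambda>i. (1 / (\<beta> * real K)) *\<^sub>R
                  (z - local_iter (mb_grad gF B s t i) \<beta> (c i) z K));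
          \<Delta>bar = (1 / real N) *\<^sub>R (\<Sum>i<N. \<Delta> i)
      in (prox h \<alpha> (z - \<alpha> *\<^sub>R \<Delta>bar), \<lambda>i. c i + \<Delta>bar - \<Delta> i))"

end

(* Each round of FedCanon is an inexact proximal gradient step z(t+1) = prox (z(t) - alpha v(t)),
   where v(t) averages the clients' local stochastic gradients.  Weak convexity of h makes the prox
   objective (1/alpha - rho)-strongly convex: this gives a descent inequality for phi = f + h with
   error alpha |v(t) - grad f(z(t))|^2, and makes the prox map Lipschitz, which bounds the proximal
   gradient by the step length and the same error.  That error splits into client drift, controlled
   through the local iterates by the control-variate error E(t) (which contracts from round to
   round because c_i(t+1) = v(t) - v_i(t)), and sampling noise.  Summing over the rounds and solving
   the resulting linear inequalities gives a bound, valid for every realisation of the samples, in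
   which only the noise terms are random.  Their second moments add up, because every fresh sample
   contributes an error with conditional mean zero, and so are of order sigma^2/B.  The term B_h
   enters through grad f(z) = G(z) - (a subgradient of h at the prox point). *)

theory Submission
  imports Defs
begin

section \<open>The proximal map of a weakly convex function\<close>

lemma ereal_add_le_ereal_iff: "(e::ereal) + ereal a \<le> ereal b \<longleftrightarrow> e \<le> ereal (b - a)"
  by (cases e) auto

lemma quadratic_ge_vertex_value:
  fixes n C G \<kappa> :: real
  assumes "\<kappa> > 0"
  shows "C - G\<^sup>2 / (4 * \<kappa>) \<le> C - G * n + \<kappa> * n\<^sup>2"
proof -
  have "0 \<le> (2 * \<kappa> * n - G)\<^sup>2" by simp
  hence "G * n - \<kappa> * n\<^sup>2 \<le> G\<^sup>2 / (4 * \<kappa>)"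
    using assms by (simp add: field_simps power2_eq_square)
  thus ?thesis by linarith
qed

lemma quadratic_le_imp_bounded:
  fixes n C G \<kappa> r :: real
  assumes "\<kappa> > 0" "n \<ge> 0" "C - G * n + \<kappa> * n\<^sup>2 \<le> r"
  shows "n \<le> (\<bar>G\<bar> + \<bar>C - r\<bar>) / \<kappa> + 1"
proof (rule ccontr)
  assume "\<not> ?thesis"
  hence large: "\<kappa> * n > \<bar>G\<bar> + \<bar>C - r\<bar> + \<kappa>" using assms(1) by (simp add: field_simps)
  hence big: "\<kappa> * n - G > \<bar>C - r\<bar>" using abs_ge_self[of G] assms(1) by linarith
  have "\<kappa> * 1 < \<kappa> * n" using large by simp
  hence "n \<ge> 1" using assms(1) by (simp add: mult_less_cancel_left_pos)
  hence "n * (\<kappa> * n - G) \<ge> 1 * (\<kappa> * n - G)"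
    using big by (intro mult_right_mono) auto
  hence "\<kappa> * n\<^sup>2 - G * n > r - C" using big by (simp add: power2_eq_square algebra_simps)
  thus False using assms(3) by linarith
qed

lemma compact_sublevels_imp_has_min:
  fixes \<psi> :: "'a::heine_borel \<Rightarrow> ereal"
  assumes compact: "\<And>r. compact {x. \<psi> x \<le> ereal r}"
    and finite_at: "\<psi> x0 \<noteq> \<infinity>" and lower: "\<And>x. ereal c \<le> \<psi> x"
  obtains p where "\<And>w. \<psi> p \<le> \<psi> w"
proof -
  define m where "m = (INF x. \<psi> x)"
  have "ereal c \<le> m" unfolding m_def using lower by (rule INF_greatest)
  moreover have "m \<le> \<psi> x0" unfolding m_def by (rule INF_lower) simp
  ultimately obtain mr where mr: "m = ereal mr" using finite_at by (cases m) auto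
  define S where "S n = {x. \<psi> x \<le> ereal (mr + 1 / Suc n)}" for n :: nat
  have "S n \<noteq> {}" for n
  proof -
    have "m < ereal (mr + 1 / Suc n)" using mr by simp
    then obtain x where "\<psi> x < ereal (mr + 1 / Suc n)" unfolding m_def by (auto simp: Inf_less_iff)
    thus ?thesis unfolding S_def by (auto intro!: exI[of _ x])
  qed
  moreover have "S n \<subseteq> S k" if "k \<le> n" for k n
  proof -
    have "1 / real (Suc n) \<le> 1 / real (Suc k)" using that by (simp add: frac_le)
    thus ?thesis unfolding S_def using order_trans by fastforce
  qed
  ultimately obtain p where p: "p \<in> \<Inter>(range S)"
    using compact_nest[of S] compact unfolding S_def by blast
  have "\<psi> p \<le> m" unfolding mr
  proof (rule ereal_le_epsilon2)
    fix e :: real assume "0 < e"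
    then obtain n :: nat where "1 / Suc n < e" using nat_approx_posE by blast
    hence "ereal (mr + 1 / Suc n) \<le> ereal mr + ereal e" by simp
    moreover have "\<psi> p \<le> ereal (mr + 1 / Suc n)" using p unfolding S_def by blast
    ultimately show "\<psi> p \<le> ereal mr + ereal e" by (rule order_trans[rotated])
  qed
  moreover have "m \<le> \<psi> w" for w unfolding m_def by (rule INF_lower) simp
  ultimately show ?thesis using that order_trans by blast
qed

lemma closed_sublevel_add_continuous:
  fixes h :: "'a::topological_space \<Rightarrow> ereal"
  assumes "closed_fun h" "continuous_on UNIV q"
  shows "closed {x. h x + ereal (q x) \<le> ereal r}"
proof -
  have "continuous_on UNIV (\<lambda>x. (x, r - q x))"
    using assms(2) by (intro continuous_intros)
  hence "closed ((\<lambda>x. (x, r - q x)) -` {(x, r). h x \<le> ereal r})"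
    using assms(1) unfolding closed_fun_def by (rule closed_vimage[rotated])
  moreover have "(\<lambda>x. (x, r - q x)) -` {(x, r). h x \<le> ereal r} = {x. h x + ereal (q x) \<le> ereal r}"
    by (auto simp: ereal_add_le_ereal_iff)
  ultimately show ?thesis by simp
qed

lemma prox_objective_has_min:
  fixes h :: "'a::{real_normed_vector, heine_borel} \<Rightarrow> ereal"
  assumes "proper_fun h" "closed_fun h" "\<alpha> > 0" "\<kappa> > 0"
    and lower: "\<And>x. ereal (C - G * norm (x - y) + \<kappa> * (norm (x - y))\<^sup>2)
                      \<le> h x + ereal ((norm (x - y))\<^sup>2 / (2 * \<alpha>))"
  obtains p where "\<And>w. h p + ereal ((norm (p - y))\<^sup>2 / (2 * \<alpha>)) \<le> h w + ereal ((norm (w - y))\<^sup>2 / (2 * \<alpha>))"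
proof -
  let ?\<psi> = "\<lambda>x. h x + ereal ((norm (x - y))\<^sup>2 / (2 * \<alpha>))"
  have compact: "compact {x. ?\<psi> x \<le> ereal r}" for r
  proof -
    let ?R = "(\<bar>G\<bar> + \<bar>C - r\<bar>) / \<kappa> + 1"
    have "closed {x. ?\<psi> x \<le> ereal r}"
      using assms(2) by (rule closed_sublevel_add_continuous) (intro continuous_intros, use assms(3) in auto)
    moreover have "{x. ?\<psi> x \<le> ereal r} \<subseteq> cball y ?R"
    proof
      fix x assume "x \<in> {x. ?\<psi> x \<le> ereal r}"
      hence "?\<psi> x \<le> ereal r" by simp
      with lower[of x] have "ereal (C - G * norm (x - y) + \<kappa> * (norm (x - y))\<^sup>2) \<le> ereal r"
        by (rule order_trans)
      hence "C - G * norm (x - y) + \<kappa> * (norm (x - y))\<^sup>2 \<le> r" by simp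
      hence "norm (x - y) \<le> ?R" using assms(4) by (intro quadratic_le_imp_bounded) auto
      thus "x \<in> cball y ?R" by (simp add: dist_norm norm_minus_commute)
    qed
    hence "bounded {x. ?\<psi> x \<le> ereal r}" by (rule bounded_subset[OF bounded_cball])
    ultimately show ?thesis by (simp add: compact_eq_bounded_closed)
  qed
  obtain x0 where "h x0 \<noteq> \<infinity>" using assms(1) unfolding proper_fun_def by auto
  hence finite_at: "?\<psi> x0 \<noteq> \<infinity>" by simp
  have "ereal (C - G\<^sup>2 / (4 * \<kappa>)) \<le> ?\<psi> x" for x
    using ereal_less_eq(3)[THEN iffD2, OF quadratic_ge_vertex_value[OF assms(4), of C G "norm (x - y)"]] lower[of x]
    by (rule order_trans)
  from compact_sublevels_imp_has_min[of ?\<psi>, OF compact finite_at this] that show ?thesis by blast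
qed

lemma power2_norm_convex_comb:
  fixes a b :: "'a::real_inner"
  shows "(norm ((1 - u) *\<^sub>R a + u *\<^sub>R b))\<^sup>2
           = (1 - u) * (norm a)\<^sup>2 + u * (norm b)\<^sup>2 - u * (1 - u) * (norm (a - b))\<^sup>2"
  by (simp only: power2_norm_eq_inner)
     (simp add: inner_add_left inner_add_right inner_diff_left inner_diff_right inner_commute algebra_simps)

lemma power2_norm_four_points:
  fixes p1 p2 y1 y2 :: "'a::real_inner"
  shows "(norm (p2 - y1))\<^sup>2 - (norm (p1 - y1))\<^sup>2 + (norm (p1 - y2))\<^sup>2 - (norm (p2 - y2))\<^sup>2
           = 2 * inner (p1 - p2) (y1 - y2)"
  by (simp add: power2_norm_eq_inner inner_diff_left inner_diff_right inner_commute algebra_simps)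

lemma power2_norm_diff_expand:
  fixes z p y :: "'a::real_inner"
  shows "(norm (z - y))\<^sup>2 = (norm (p - y))\<^sup>2 + 2 * inner (p - y) (z - p) + (norm (z - p))\<^sup>2"
  by (simp add: power2_norm_eq_inner inner_diff_left inner_diff_right inner_commute algebra_simps)

lemma le_if_le_add_small_multiples:
  fixes a b c :: real
  assumes "c \<ge> 0" "\<And>u. 0 < u \<Longrightarrow> u < 1 \<Longrightarrow> a \<le> b + u * c"
  shows "a \<le> b"
proof (rule field_le_epsilon)
  fix e :: real assume "0 < e"
  define u where "u = min (1 / 2) (e / (c + 1))"
  have u: "0 < u" "u < 1" using \<open>0 < e\<close> assms(1) unfolding u_def by auto
  have "u * c \<le> e / (c + 1) * c" using assms(1) unfolding u_def by (intro mult_right_mono) auto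
  also have "\<dots> \<le> e" using \<open>0 < e\<close> assms(1) by (simp add: field_simps)
  finally show "a \<le> b + e" using assms(2)[OF u] by linarith
qed

lemma weakly_convex_combination_le:
  fixes h :: "'a::real_inner \<Rightarrow> ereal"
  assumes "weakly_convex \<rho> h" "h x = ereal a" "h y = ereal b" "0 \<le> u" "u \<le> 1"
  shows "h ((1 - u) *\<^sub>R x + u *\<^sub>R y)
           \<le> ereal ((1 - u) * a + u * b + \<rho> / 2 * u * (1 - u) * (norm (x - y))\<^sup>2)"
proof -
  let ?xu = "(1 - u) *\<^sub>R x + u *\<^sub>R y"
  have "h ?xu + ereal (\<rho> / 2 * (norm ?xu)\<^sup>2)
          \<le> ereal ((1 - u) * (a + \<rho> / 2 * (norm x)\<^sup>2) + u * (b + \<rho> / 2 * (norm y)\<^sup>2))"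
    using assms unfolding weakly_convex_def ereal_convex_def by (metis plus_ereal.simps(1) times_ereal.simps(1))
  hence "h ?xu \<le> ereal ((1 - u) * (a + \<rho> / 2 * (norm x)\<^sup>2) + u * (b + \<rho> / 2 * (norm y)\<^sup>2) - \<rho> / 2 * (norm ?xu)\<^sup>2)"
    by (simp add: ereal_add_le_ereal_iff)
  also have "\<dots> = ereal ((1 - u) * a + u * b + \<rho> / 2 * u * (1 - u) * (norm (x - y))\<^sup>2)"
    unfolding power2_norm_convex_comb by (simp add: field_simps)
  finally show ?thesis .
qed

locale prox_setting =
  fixes h :: "'a::{real_inner, heine_borel} \<Rightarrow> ereal" and \<rho> \<alpha> L \<phi>min :: real
    and f :: "'a \<Rightarrow> real" and gradf :: "'a \<Rightarrow> 'a"
  assumes h_proper: "proper_fun h" and h_closed: "closed_fun h"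
    and h_weakly_convex: "weakly_convex \<rho> h"
    and \<alpha>_pos: "\<alpha> > 0" and \<alpha>\<rho>_less_1: "\<alpha> * \<rho> < 1"
    and L_nonneg: "L \<ge> 0" and \<alpha>L_less_1: "\<alpha> * L < 1"
    and h_ge: "\<And>x. ereal (\<phi>min - f x) \<le> h x"
    and f_upper: "\<And>x y. f x \<le> f y + inner (gradf y) (x - y) + L / 2 * (norm (x - y))\<^sup>2"
begin

lemma h_neq_minf: "h x \<noteq> -\<infinity>"
  using h_proper unfolding proper_fun_def by auto

lemma prox_minimizes:
  "h (prox h \<alpha> y) + ereal ((norm (prox h \<alpha> y - y))\<^sup>2 / (2 * \<alpha>))
     \<le> h w + ereal ((norm (w - y))\<^sup>2 / (2 * \<alpha>))"
proof -
  define \<kappa> where "\<kappa> = 1 / (2 * \<alpha>) - L / 2"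
  have \<kappa>: "\<kappa> > 0" using \<alpha>_pos \<alpha>L_less_1 unfolding \<kappa>_def by (simp add: field_simps)
  have "ereal ((\<phi>min - f y) - norm (gradf y) * norm (x - y) + \<kappa> * (norm (x - y))\<^sup>2)
          \<le> h x + ereal ((norm (x - y))\<^sup>2 / (2 * \<alpha>))" for x
  proof -
    have "inner (gradf y) (x - y) \<le> norm (gradf y) * norm (x - y)" by (rule norm_cauchy_schwarz)
    hence "(\<phi>min - f y) - norm (gradf y) * norm (x - y) + \<kappa> * (norm (x - y))\<^sup>2
             \<le> (\<phi>min - f x) + (norm (x - y))\<^sup>2 / (2 * \<alpha>)"
      using f_upper[of x y] unfolding \<kappa>_def by (simp add: algebra_simps)
    hence "ereal ((\<phi>min - f y) - norm (gradf y) * norm (x - y) + \<kappa> * (norm (x - y))\<^sup>2)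
             \<le> ereal (\<phi>min - f x) + ereal ((norm (x - y))\<^sup>2 / (2 * \<alpha>))"
      by simp
    also have "\<dots> \<le> h x + ereal ((norm (x - y))\<^sup>2 / (2 * \<alpha>))" using h_ge[of x] by (rule add_right_mono)
    finally show ?thesis .
  qed
  then obtain p where p: "\<And>w. h p + ereal ((norm (p - y))\<^sup>2 / (2 * \<alpha>)) \<le> h w + ereal ((norm (w - y))\<^sup>2 / (2 * \<alpha>))"
    using prox_objective_has_min[OF h_proper h_closed \<alpha>_pos \<kappa>] by blast
  show ?thesis unfolding prox_def by (rule someI2[where a = p]) (use p in auto)
qed

lemma h_prox_real: obtains r where "h (prox h \<alpha> y) = ereal r"
proof -
  obtain x0 where "h x0 \<noteq> \<infinity>" using h_proper unfolding proper_fun_def by auto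
  hence "h x0 + ereal ((norm (x0 - y))\<^sup>2 / (2 * \<alpha>)) < \<infinity>" by simp
  with prox_minimizes[of y x0] have "h (prox h \<alpha> y) \<noteq> \<infinity>" by auto
  with h_neq_minf that show ?thesis by (cases "h (prox h \<alpha> y)") auto
qed

text \<open>The prox objective is \<open>(1/\<alpha> - \<rho>)\<close>-strongly convex, so it grows quadratically away from its minimiser.\<close>
lemma prox_quadratic_growth:
  assumes "h w = ereal a" "h (prox h \<alpha> y) = ereal b"
  shows "b + (norm (prox h \<alpha> y - y))\<^sup>2 / (2 * \<alpha>) + (1 / \<alpha> - \<rho>) / 2 * (norm (w - prox h \<alpha> y))\<^sup>2
           \<le> a + (norm (w - y))\<^sup>2 / (2 * \<alpha>)"
proof -
  define p where "p = prox h \<alpha> y"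
  define D where "D = (norm (p - w))\<^sup>2"
  define \<mu> where "\<mu> = 1 / \<alpha> - \<rho>"
  define c where "c = \<mu> / 2 * D"
  define \<Phi>p where "\<Phi>p = b + (norm (p - y))\<^sup>2 / (2 * \<alpha>)"
  define \<Phi>w where "\<Phi>w = a + (norm (w - y))\<^sup>2 / (2 * \<alpha>)"
  have \<mu>: "\<mu> \<ge> 0" using \<alpha>_pos \<alpha>\<rho>_less_1 unfolding \<mu>_def by (simp add: field_simps)
  have hp: "h p = ereal b" using assms(2) unfolding p_def .
  have "\<Phi>p + c \<le> \<Phi>w"
  proof (rule le_if_le_add_small_multiples)
    show "c \<ge> 0" using \<mu> unfolding c_def D_def by simp
  next
    fix u :: real assume u: "0 < u" "u < 1"
    define xu where "xu = (1 - u) *\<^sub>R p + u *\<^sub>R w"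
    have "xu - y = (1 - u) *\<^sub>R (p - y) + u *\<^sub>R (w - y)" unfolding xu_def by (simp add: algebra_simps)
    hence xu_y: "(norm (xu - y))\<^sup>2 = (1 - u) * (norm (p - y))\<^sup>2 + u * (norm (w - y))\<^sup>2 - u * (1 - u) * D"
      unfolding D_def by (simp add: power2_norm_convex_comb)
    have "ereal \<Phi>p \<le> h xu + ereal ((norm (xu - y))\<^sup>2 / (2 * \<alpha>))"
      using prox_minimizes[of y xu] hp unfolding p_def \<Phi>p_def by simp
    also have "\<dots> \<le> ereal ((1 - u) * b + u * a + \<rho> / 2 * u * (1 - u) * D) + ereal ((norm (xu - y))\<^sup>2 / (2 * \<alpha>))"
      using weakly_convex_combination_le[OF h_weakly_convex hp assms(1)] u
      unfolding xu_def D_def by (intro add_right_mono) simp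
    finally have "\<Phi>p \<le> (1 - u) * b + u * a + \<rho> / 2 * u * (1 - u) * D + (norm (xu - y))\<^sup>2 / (2 * \<alpha>)"
      by simp
    also have "\<dots> = (1 - u) * \<Phi>p + u * \<Phi>w - u * (1 - u) * c"
      unfolding xu_y \<Phi>p_def \<Phi>w_def c_def \<mu>_def using \<alpha>_pos by (simp add: field_simps)
    finally have "u * (\<Phi>p + c) \<le> u * (\<Phi>w + u * c)"
      by (simp add: algebra_simps)
    thus "\<Phi>p + c \<le> \<Phi>w + u * c" using u by simp
  qed
  thus ?thesis unfolding \<Phi>p_def \<Phi>w_def c_def p_def D_def \<mu>_def by (simp add: norm_minus_commute)
qed

lemma prox_lipschitz: "norm (prox h \<alpha> y1 - prox h \<alpha> y2) \<le> norm (y1 - y2) / (1 - \<alpha> * \<rho>)"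
proof -
  define p1 where "p1 = prox h \<alpha> y1"
  define p2 where "p2 = prox h \<alpha> y2"
  obtain r1 where r1: "h p1 = ereal r1" unfolding p1_def by (rule h_prox_real)
  obtain r2 where r2: "h p2 = ereal r2" unfolding p2_def by (rule h_prox_real)
  define \<mu> where "\<mu> = 1 / \<alpha> - \<rho>"
  have \<mu>: "\<mu> > 0" using \<alpha>_pos \<alpha>\<rho>_less_1 unfolding \<mu>_def by (simp add: field_simps)
  have "r1 + (norm (p1 - y1))\<^sup>2 / (2 * \<alpha>) + \<mu> / 2 * (norm (p2 - p1))\<^sup>2 \<le> r2 + (norm (p2 - y1))\<^sup>2 / (2 * \<alpha>)"
    using prox_quadratic_growth[of p2 r2 y1 r1] r1 r2 unfolding p1_def p2_def \<mu>_def by simp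
  moreover have "r2 + (norm (p2 - y2))\<^sup>2 / (2 * \<alpha>) + \<mu> / 2 * (norm (p1 - p2))\<^sup>2 \<le> r1 + (norm (p1 - y2))\<^sup>2 / (2 * \<alpha>)"
    using prox_quadratic_growth[of p1 r1 y2 r2] r1 r2 unfolding p1_def p2_def \<mu>_def by simp
  ultimately have "\<mu> * (norm (p1 - p2))\<^sup>2
      \<le> ((norm (p2 - y1))\<^sup>2 - (norm (p1 - y1))\<^sup>2 + (norm (p1 - y2))\<^sup>2 - (norm (p2 - y2))\<^sup>2) / (2 * \<alpha>)"
    by (simp add: norm_minus_commute diff_divide_distrib add_divide_distrib)
  also have "\<dots> = inner (p1 - p2) (y1 - y2) / \<alpha>" unfolding power2_norm_four_points by simp
  also have "\<dots> \<le> norm (p1 - p2) * norm (y1 - y2) / \<alpha>"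
    using \<alpha>_pos by (simp add: divide_right_mono norm_cauchy_schwarz)
  finally have le: "(\<mu> * norm (p1 - p2)) * norm (p1 - p2) \<le> (norm (y1 - y2) / \<alpha>) * norm (p1 - p2)"
    by (simp add: power2_eq_square algebra_simps)
  have "\<mu> * norm (p1 - p2) \<le> norm (y1 - y2) / \<alpha>"
  proof (cases "p1 = p2")
    case True thus ?thesis using \<alpha>_pos by simp
  next
    case False thus ?thesis using mult_right_le_imp_le[OF le] by simp
  qed
  hence "norm (p1 - p2) \<le> norm (y1 - y2) / \<alpha> / \<mu>" by (simp only: pos_le_divide_eq[OF \<mu>] mult.commute)
  also have "\<dots> = norm (y1 - y2) / (1 - \<alpha> * \<rho>)"
    unfolding \<mu>_def using \<alpha>_pos by (simp add: field_simps)
  finally show ?thesis unfolding p1_def p2_def .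
qed

lemma prox_residual_in_subdiff: "(1 / \<alpha>) *\<^sub>R (y - prox h \<alpha> y) \<in> subdiff h (prox h \<alpha> y)"
proof -
  define p where "p = prox h \<alpha> y"
  define v where "v = (1 / \<alpha>) *\<^sub>R (y - p)"
  obtain r where r: "h p = ereal r" unfolding p_def by (rule h_prox_real)
  have "h p + ereal (inner v (z - p) - \<epsilon> * norm (z - p)) \<le> h z"
    if "\<epsilon> > 0" "norm (z - p) < 2 * \<alpha> * \<epsilon>" for \<epsilon> z
  proof (cases "h z")
    case (real rz)
    have "r + (norm (p - y))\<^sup>2 / (2 * \<alpha>) \<le> rz + (norm (z - y))\<^sup>2 / (2 * \<alpha>)"
      using prox_minimizes[of y z] r real unfolding p_def by simp
    moreover have "inner v (z - p) = - inner (p - y) (z - p) / \<alpha>"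
      unfolding v_def by (simp add: inner_diff_left)
    hence "(norm (z - y))\<^sup>2 / (2 * \<alpha>) = (norm (p - y))\<^sup>2 / (2 * \<alpha>) - inner v (z - p) + (norm (z - p))\<^sup>2 / (2 * \<alpha>)"
      unfolding power2_norm_diff_expand[of z y p] using \<alpha>_pos by (simp add: add_divide_distrib)
    moreover have "(norm (z - p))\<^sup>2 / (2 * \<alpha>) \<le> \<epsilon> * norm (z - p)"
    proof -
      have "norm (z - p) / (2 * \<alpha>) \<le> \<epsilon>" using that(2) \<alpha>_pos by (simp add: divide_le_eq mult.commute)
      hence "norm (z - p) * (norm (z - p) / (2 * \<alpha>)) \<le> norm (z - p) * \<epsilon>" by (rule mult_left_mono) simp
      thus ?thesis by (simp add: power2_eq_square mult.commute)
    qed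
    ultimately have "r + (inner v (z - p) - \<epsilon> * norm (z - p)) \<le> rz" by linarith
    thus ?thesis using r real by simp
  qed (use h_neq_minf in auto)
  hence "\<exists>\<delta>>0. \<forall>z. norm (z - p) < \<delta> \<longrightarrow> h p + ereal (inner v (z - p) - \<epsilon> * norm (z - p)) \<le> h z"
    if "\<epsilon> > 0" for \<epsilon>
    using that \<alpha>_pos by (intro exI[of _ "2 * \<alpha> * \<epsilon>"]) auto
  thus ?thesis using r unfolding subdiff_def v_def p_def by simp
qed

end

section \<open>One run of FedCanon\<close>

lemma local_iter_eq_sum:
  "local_iter g \<beta> c z k = z - \<beta> *\<^sub>R (\<Sum>j<k. g j (local_iter g \<beta> c z j) + c)"
  by (induction k) (auto simp: algebra_simps)

lemma power2_norm_sum_le: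
  fixes y :: "'i \<Rightarrow> 'a::real_normed_vector"
  shows "(norm (\<Sum>j\<in>A. y j))\<^sup>2 \<le> real (card A) * (\<Sum>j\<in>A. (norm (y j))\<^sup>2)"
proof -
  have "(norm (\<Sum>j\<in>A. y j))\<^sup>2 \<le> (\<Sum>j\<in>A. norm (y j))\<^sup>2" by (simp add: norm_sum power_mono)
  also have "\<dots> \<le> (\<Sum>j\<in>A. (norm (y j))\<^sup>2) * real (card A)" by (rule sum_squared_le_sum_of_squares)
  finally show ?thesis by (simp add: mult.commute)
qed

lemma power2_norm_mean_le:
  fixes y :: "nat \<Rightarrow> 'a::real_normed_vector"
  assumes "n > 0"
  shows "(norm ((1 / real n) *\<^sub>R (\<Sum>j<n. y j)))\<^sup>2 \<le> (1 / real n) * (\<Sum>j<n. (norm (y j))\<^sup>2)"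
proof -
  have "(norm ((1 / real n) *\<^sub>R (\<Sum>j<n. y j)))\<^sup>2 = (1 / real n)\<^sup>2 * (norm (\<Sum>j<n. y j))\<^sup>2"
    by (simp add: power_divide)
  also have "\<dots> \<le> (1 / real n)\<^sup>2 * (real n * (\<Sum>j<n. (norm (y j))\<^sup>2))"
    using power2_norm_sum_le[of y "{..<n}"] by (intro mult_left_mono) auto
  also have "\<dots> = (1 / real n) * (\<Sum>j<n. (norm (y j))\<^sup>2)" using assms by (simp add: power2_eq_square)
  finally show ?thesis .
qed

lemma power2_norm_add_le: "(norm ((a::'a::real_normed_vector) + b))\<^sup>2 \<le> 2 * (norm a)\<^sup>2 + 2 * (norm b)\<^sup>2"
proof -
  have "(norm (a + b))\<^sup>2 \<le> (norm a + norm b)\<^sup>2" by (simp add: norm_triangle_ineq power_mono)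
  also have "\<dots> \<le> 2 * (norm a)\<^sup>2 + 2 * (norm b)\<^sup>2" using sum_squares_bound[of "norm a" "norm b"]
    by (simp add: power2_eq_square algebra_simps)
  finally show ?thesis .
qed

lemma power2_norm_add3_le:
  "(norm ((a::'a::real_normed_vector) + b + c))\<^sup>2 \<le> 3 * ((norm a)\<^sup>2 + (norm b)\<^sup>2 + (norm c)\<^sup>2)"
  using power2_norm_sum_le[of "\<lambda>j. [a, b, c] ! j" "{..<Suc (Suc (Suc 0))}"] by (simp add: lessThan_Suc add_ac)

lemma power2_norm_add4_le:
  "(norm ((a::'a::real_normed_vector) + b + c + d))\<^sup>2 \<le> 4 * ((norm a)\<^sup>2 + (norm b)\<^sup>2 + (norm c)\<^sup>2 + (norm d)\<^sup>2)"
  using power2_norm_sum_le[of "\<lambda>j. [a, b, c, d] ! j" "{..<Suc (Suc (Suc (Suc 0)))}"]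
  by (simp add: lessThan_Suc add_ac)

lemma mean_power2_norm_deviation_le:
  fixes X :: "nat \<Rightarrow> 'a::real_inner"
  assumes "n > 0"
  shows "(1 / real n) * (\<Sum>i<n. (norm (X i - (1 / real n) *\<^sub>R (\<Sum>j<n. X j)))\<^sup>2)
           \<le> (1 / real n) * (\<Sum>i<n. (norm (X i))\<^sup>2)"
proof -
  define m where "m = (1 / real n) *\<^sub>R (\<Sum>j<n. X j)"
  have sum_X: "(\<Sum>j<n. X j) = real n *\<^sub>R m" unfolding m_def using assms by simp
  have "(\<Sum>i<n. (norm (X i - m))\<^sup>2) = (\<Sum>i<n. (norm (X i))\<^sup>2 - 2 * inner (X i) m + (norm m)\<^sup>2)"
    by (intro sum.cong refl) (simp add: power2_norm_eq_inner inner_diff_left inner_diff_right inner_commute)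
  also have "\<dots> = (\<Sum>i<n. (norm (X i))\<^sup>2) - 2 * inner (\<Sum>i<n. X i) m + real n * (norm m)\<^sup>2"
    by (simp add: sum.distrib sum_subtractf inner_sum_left sum_distrib_left)
  also have "\<dots> = (\<Sum>i<n. (norm (X i))\<^sup>2) - real n * (norm m)\<^sup>2"
    unfolding sum_X by (simp add: power2_norm_eq_inner)
  finally have "(\<Sum>i<n. (norm (X i - m))\<^sup>2) \<le> (\<Sum>i<n. (norm (X i))\<^sup>2)" by simp
  thus ?thesis unfolding m_def by (intro mult_left_mono) auto
qed

lemma inner_le_young:
  fixes d w :: "'a::real_inner"
  assumes "\<alpha> > 0"
  shows "- inner d w \<le> (norm d)\<^sup>2 / (4 * \<alpha>) + \<alpha> * (norm w)\<^sup>2"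
proof -
  have "0 \<le> (norm (d + (2 * \<alpha>) *\<^sub>R w))\<^sup>2 / (4 * \<alpha>)" using assms by simp
  also have "(norm (d + (2 * \<alpha>) *\<^sub>R w))\<^sup>2 = (norm d)\<^sup>2 + 4 * \<alpha> * inner d w + 4 * \<alpha>\<^sup>2 * (norm w)\<^sup>2"
    by (simp only: power2_norm_eq_inner)
       (simp add: inner_add_left inner_add_right inner_commute algebra_simps power2_eq_square)
  also have "\<dots> / (4 * \<alpha>) = (norm d)\<^sup>2 / (4 * \<alpha>) + inner d w + \<alpha> * (norm w)\<^sup>2"
    using assms by (simp add: field_simps power2_eq_square)
  finally show ?thesis by simp
qed

lemma solve_path_inequalities:
  fixes P S Y W F R Z V W0 BT :: real
  assumes "P \<le> 2 * S + 8 * Y" "Y \<le> (W + F + R) / 150 + 2 * Z" "F \<le> 2 * P + 2 * BT"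
    "W \<le> W0 + 3 / 8 * S + (W + F + R) / 100 + 3 * Z" "S \<le> 2 * V + 2 * Y"
    "0 \<le> V" "0 \<le> W0" "0 \<le> R" "0 \<le> Z" "0 \<le> BT"
  shows "P \<le> 8 * V + 8 * W0 + BT + R / 8 + 50 * Z"
  using assms unfolding add_divide_distrib by linarith

locale fedcanon_path = prox_setting h \<rho> \<alpha> L \<phi>min fbar gradf
  for h :: "'a::{real_inner, heine_borel} \<Rightarrow> ereal" and \<rho> \<alpha> L \<phi>min fbar gradf +
  fixes N K B :: nat and gf :: "nat \<Rightarrow> 'a \<Rightarrow> 'a" and gF :: "nat \<Rightarrow> 'a \<Rightarrow> 'b \<Rightarrow> 'a"
    and \<beta> Bh :: real and z0 :: 'a and c0 :: "nat \<Rightarrow> 'a"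
    and s :: "nat \<Rightarrow> nat \<Rightarrow> nat \<Rightarrow> nat \<Rightarrow> 'b"
  assumes gradf_def: "gradf = (\<lambda>x. (1 / real N) *\<^sub>R (\<Sum>i<N. gf i x))"
    and N_pos: "N > 0" and K_pos: "K > 0" and \<beta>_pos: "\<beta> > 0" and \<rho>_nonneg: "\<rho> \<ge> 0"
    and gf_lipschitz: "\<And>i x y. i < N \<Longrightarrow> norm (gf i x - gf i y) \<le> L * norm (x - y)"
    and subdiff_bound: "\<And>z v. v \<in> subdiff h z \<Longrightarrow> (norm v)\<^sup>2 \<le> Bh"
    and \<alpha>_step: "\<alpha> * (\<rho> + L) + 4 * \<alpha>\<^sup>2 * L\<^sup>2 \<le> 1 / 2"
    and \<beta>_step: "1344 * \<beta>\<^sup>2 * (real K)\<^sup>2 * L\<^sup>2 \<le> 1"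
    and c0_sum: "(\<Sum>i<N. c0 i) = 0"
begin

definition z_iter :: "nat \<Rightarrow> 'a" where "z_iter t = fst (fedcanon gF h N K B \<alpha> \<beta> z0 c0 s t)"
definition c_iter :: "nat \<Rightarrow> nat \<Rightarrow> 'a" where "c_iter t = snd (fedcanon gF h N K B \<alpha> \<beta> z0 c0 s t)"
definition x_loc :: "nat \<Rightarrow> nat \<Rightarrow> nat \<Rightarrow> 'a"
  where "x_loc t i k = local_iter (mb_grad gF B s t i) \<beta> (c_iter t i) (z_iter t) k"
definition g_loc :: "nat \<Rightarrow> nat \<Rightarrow> nat \<Rightarrow> 'a" where "g_loc t i k = mb_grad gF B s t i k (x_loc t i k)"
definition e_loc :: "nat \<Rightarrow> nat \<Rightarrow> nat \<Rightarrow> 'a" where "e_loc t i k = g_loc t i k - gf i (x_loc t i k)"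
definition e_sum :: "nat \<Rightarrow> nat \<Rightarrow> nat \<Rightarrow> 'a" where "e_sum t i k = (\<Sum>j<k. e_loc t i j)"
definition v_loc :: "nat \<Rightarrow> nat \<Rightarrow> 'a" where "v_loc t i = (1 / real K) *\<^sub>R (\<Sum>k<K. g_loc t i k)"
definition v_avg :: "nat \<Rightarrow> 'a" where "v_avg t = (1 / real N) *\<^sub>R (\<Sum>i<N. v_loc t i)"

lemma z_iter_0: "z_iter 0 = z0" and c_iter_0: "c_iter 0 = c0"
  unfolding z_iter_def c_iter_def by simp_all

lemma x_loc_eq_sum: "x_loc t i k = z_iter t - \<beta> *\<^sub>R (\<Sum>j<k. g_loc t i j + c_iter t i)"
  unfolding x_loc_def g_loc_def by (rule local_iter_eq_sum)

lemma client_increment_eq: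
  "(1 / (\<beta> * real K)) *\<^sub>R (z_iter t - local_iter (mb_grad gF B s t i) \<beta> (c_iter t i) (z_iter t) K)
     = v_loc t i + c_iter t i"
proof -
  have "z_iter t - local_iter (mb_grad gF B s t i) \<beta> (c_iter t i) (z_iter t) K
          = \<beta> *\<^sub>R ((\<Sum>j<K. g_loc t i j) + real K *\<^sub>R c_iter t i)"
    using x_loc_eq_sum[of t i K] unfolding x_loc_def by (simp add: sum.distrib sum_constant_scaleR)
  thus ?thesis using \<beta>_pos K_pos unfolding v_loc_def by (simp add: scaleR_add_right)
qed

lemma iter_Suc_with_sum_c:
  fixes t i :: nat
  defines "\<Delta> \<equiv> v_avg t + (1 / real N) *\<^sub>R (\<Sum>i<N. c_iter t i)"
  shows "z_iter (Suc t) = prox h \<alpha> (z_iter t - \<alpha> *\<^sub>R \<Delta>)"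
    and "c_iter (Suc t) i = c_iter t i + \<Delta> - (v_loc t i + c_iter t i)"
proof -
  have "(1 / real N) *\<^sub>R (\<Sum>i<N. v_loc t i + c_iter t i) = \<Delta>"
    unfolding \<Delta>_def v_avg_def by (simp add: sum.distrib algebra_simps)
  thus "z_iter (Suc t) = prox h \<alpha> (z_iter t - \<alpha> *\<^sub>R \<Delta>)"
    and "c_iter (Suc t) i = c_iter t i + \<Delta> - (v_loc t i + c_iter t i)"
    unfolding z_iter_def c_iter_def
    by (simp_all only: fedcanon.simps Let_def fst_conv snd_conv
          client_increment_eq[unfolded z_iter_def c_iter_def])
qed

lemma sum_c_iter: "(\<Sum>i<N. c_iter t i) = 0"
proof (induction t)
  case 0 thus ?case using c0_sum by (simp add: c_iter_0)
next
  case (Suc t)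
  have "(\<Sum>i<N. c_iter (Suc t) i) = (\<Sum>i<N. v_avg t - v_loc t i)"
    by (intro sum.cong refl) (simp add: iter_Suc_with_sum_c(2) Suc)
  also have "\<dots> = real N *\<^sub>R v_avg t - (\<Sum>i<N. v_loc t i)" by (simp add: sum_subtractf sum_constant_scaleR)
  also have "\<dots> = 0" unfolding v_avg_def using N_pos by simp
  finally show ?case .
qed

lemma z_iter_Suc: "z_iter (Suc t) = prox h \<alpha> (z_iter t - \<alpha> *\<^sub>R v_avg t)"
  and c_iter_Suc: "c_iter (Suc t) i = v_avg t - v_loc t i"
  using iter_Suc_with_sum_c(1)[of t] iter_Suc_with_sum_c(2)[of t i] sum_c_iter[of t] by simp_all

definition cv_err :: "nat \<Rightarrow> nat \<Rightarrow> 'a"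
  where "cv_err t i = gf i (z_iter t) + c_iter t i - gradf (z_iter t)"
definition drift :: "nat \<Rightarrow> nat \<Rightarrow> real"
  where "drift t i = (\<Sum>k<K. (norm (x_loc t i k - z_iter t))\<^sup>2)"
definition drift_src :: "nat \<Rightarrow> nat \<Rightarrow> real"
  where "drift_src t i = (norm (cv_err t i))\<^sup>2 + (norm (gradf (z_iter t)))\<^sup>2"
definition e_sum_sq :: "nat \<Rightarrow> nat \<Rightarrow> real" where "e_sum_sq t i = (\<Sum>k<K. (norm (e_sum t i k))\<^sup>2)"

lemma gf_diff_sq_le: "i < N \<Longrightarrow> (norm (gf i x - gf i y))\<^sup>2 \<le> L\<^sup>2 * (norm (x - y))\<^sup>2"
  using gf_lipschitz[of i x y] by (simp add: power_mono power_mult_distrib[symmetric])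

lemma z_iter_minus_x_loc:
  "z_iter t - x_loc t i k = \<beta> *\<^sub>R ((\<Sum>j<k. gf i (x_loc t i j) - gf i (z_iter t))
     + real k *\<^sub>R cv_err t i + real k *\<^sub>R gradf (z_iter t) + e_sum t i k)"
proof -
  have "(\<Sum>j<k. g_loc t i j + c_iter t i)
          = (\<Sum>j<k. (gf i (x_loc t i j) - gf i (z_iter t)) + (cv_err t i + gradf (z_iter t)) + e_loc t i j)"
    by (intro sum.cong refl) (simp add: e_loc_def cv_err_def)
  also have "\<dots> = (\<Sum>j<k. gf i (x_loc t i j) - gf i (z_iter t))
                   + real k *\<^sub>R cv_err t i + real k *\<^sub>R gradf (z_iter t) + e_sum t i k"
    unfolding e_sum_def by (simp add: sum.distrib sum_constant_scaleR scaleR_add_right)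
  finally show ?thesis using x_loc_eq_sum[of t i k] by simp
qed

lemma x_loc_deviation_bound:
  assumes i: "i < N" and k: "k \<le> K"
  shows "(norm (x_loc t i k - z_iter t))\<^sup>2
           \<le> 4 * \<beta>\<^sup>2 * (real K * L\<^sup>2 * drift t i + (real K)\<^sup>2 * drift_src t i + (norm (e_sum t i k))\<^sup>2)"
proof -
  define A where "A = (\<Sum>j<k. gf i (x_loc t i j) - gf i (z_iter t))"
  have "(norm A)\<^sup>2 \<le> real k * (\<Sum>j<k. (norm (gf i (x_loc t i j) - gf i (z_iter t)))\<^sup>2)"
    unfolding A_def using power2_norm_sum_le[of _ "{..<k}"] by simp
  also have "\<dots> \<le> real K * (\<Sum>j<K. L\<^sup>2 * (norm (x_loc t i j - z_iter t))\<^sup>2)"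
  proof (rule mult_mono)
    have "(\<Sum>j<k. (norm (gf i (x_loc t i j) - gf i (z_iter t)))\<^sup>2) \<le> (\<Sum>j<k. L\<^sup>2 * (norm (x_loc t i j - z_iter t))\<^sup>2)"
      using gf_diff_sq_le[OF i] by (rule sum_mono)
    also have "\<dots> \<le> (\<Sum>j<K. L\<^sup>2 * (norm (x_loc t i j - z_iter t))\<^sup>2)"
      using k by (intro sum_mono2) auto
    finally show "(\<Sum>j<k. (norm (gf i (x_loc t i j) - gf i (z_iter t)))\<^sup>2) \<le> (\<Sum>j<K. L\<^sup>2 * (norm (x_loc t i j - z_iter t))\<^sup>2)" .
  qed (use k in \<open>auto intro: sum_nonneg\<close>)
  also have "\<dots> = real K * L\<^sup>2 * drift t i" unfolding drift_def by (simp add: sum_distrib_left mult.assoc)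
  finally have A_bound: "(norm A)\<^sup>2 \<le> real K * L\<^sup>2 * drift t i" .
  have k_le: "(real k)\<^sup>2 \<le> (real K)\<^sup>2" using k by (simp add: power_mono)
  have "(norm (x_loc t i k - z_iter t))\<^sup>2 = \<beta>\<^sup>2 * (norm (A + real k *\<^sub>R cv_err t i + real k *\<^sub>R gradf (z_iter t) + e_sum t i k))\<^sup>2"
    unfolding norm_minus_commute[of "x_loc t i k"] z_iter_minus_x_loc A_def by (simp add: power_mult_distrib)
  also have "\<dots> \<le> \<beta>\<^sup>2 * (4 * ((norm A)\<^sup>2 + (norm (real k *\<^sub>R cv_err t i))\<^sup>2
                   + (norm (real k *\<^sub>R gradf (z_iter t)))\<^sup>2 + (norm (e_sum t i k))\<^sup>2))"
    by (intro mult_left_mono power2_norm_add4_le) auto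
  also have "\<dots> = 4 * \<beta>\<^sup>2 * ((norm A)\<^sup>2 + (real k)\<^sup>2 * drift_src t i + (norm (e_sum t i k))\<^sup>2)"
    unfolding drift_src_def by (simp add: power_mult_distrib algebra_simps)
  also have "\<dots> \<le> 4 * \<beta>\<^sup>2 * (real K * L\<^sup>2 * drift t i + (real K)\<^sup>2 * drift_src t i + (norm (e_sum t i k))\<^sup>2)"
    using A_bound k_le by (intro mult_left_mono add_mono mult_right_mono) (auto simp: drift_src_def)
  finally show ?thesis .
qed

text \<open>The local drift appears on both sides of its own bound; the step-size condition on \<open>\<beta>\<close>
  makes its coefficient at most \<open>1/336\<close>, so it can be absorbed.\<close>
lemma drift_bound:
  assumes i: "i < N"
  shows "L\<^sup>2 * drift t i / real K \<le> (drift_src t i + e_sum_sq t i / (real K)\<^sup>2) / 300"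
proof -
  define b where "b = 4 * \<beta>\<^sup>2 * (real K)\<^sup>2 * L\<^sup>2"
  define Q where "Q = L\<^sup>2 * drift t i / real K"
  define Y where "Y = drift_src t i + e_sum_sq t i / (real K)\<^sup>2"
  have b: "0 \<le> b" "b \<le> 1 / 336" using \<beta>_step unfolding b_def by auto
  have Q0: "Q \<ge> 0" unfolding Q_def drift_def by (simp add: sum_nonneg)
  have Y0: "Y \<ge> 0" unfolding Y_def drift_src_def e_sum_sq_def by (simp add: sum_nonneg)
  have "drift t i = (\<Sum>k<K. (norm (x_loc t i k - z_iter t))\<^sup>2)" by (simp only: drift_def)
  also have "\<dots> \<le> (\<Sum>k<K. 4 * \<beta>\<^sup>2 * (real K * L\<^sup>2 * drift t i + (real K)\<^sup>2 * drift_src t i + (norm (e_sum t i k))\<^sup>2))"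
    using x_loc_deviation_bound[OF i] by (intro sum_mono) auto
  also have "\<dots> = 4 * \<beta>\<^sup>2 * ((real K)\<^sup>2 * L\<^sup>2 * drift t i + (real K)^3 * drift_src t i + e_sum_sq t i)"
    unfolding e_sum_sq_def
    by (simp add: sum.distrib sum_distrib_left power2_eq_square power3_eq_cube algebra_simps)
  finally have "Q \<le> L\<^sup>2 / real K * (4 * \<beta>\<^sup>2 * ((real K)\<^sup>2 * L\<^sup>2 * drift t i + (real K)^3 * drift_src t i + e_sum_sq t i))"
    unfolding Q_def by (simp add: divide_right_mono mult_left_mono)
  also have "\<dots> = b * Q + b * drift_src t i + b * (e_sum_sq t i / (real K)^3)"
    using K_pos unfolding Q_def b_def by (simp add: field_simps power2_eq_square power3_eq_cube)
  also have "e_sum_sq t i / (real K)^3 \<le> e_sum_sq t i / (real K)\<^sup>2"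
    using K_pos by (intro divide_left_mono) (auto simp: e_sum_sq_def sum_nonneg power_increasing)
  finally have "Q \<le> b * Q + b * Y"
    using b unfolding Y_def by (simp add: mult_left_mono distrib_left)
  moreover have "b * Q \<le> 1 / 336 * Q" "b * Y \<le> 1 / 336 * Y"
    using b Q0 Y0 by (simp_all only: mult_right_mono)
  ultimately have "Q \<le> Y / 300" using Y0 by linarith
  thus ?thesis unfolding Q_def Y_def .
qed

text \<open>\<open>cv_sq t\<close> is the quantity \<open>\<E>\<^sup>t\<close> of the paper before taking expectations.\<close>
definition cv_sq :: "nat \<Rightarrow> real" where "cv_sq t = (1 / real N) * (\<Sum>i<N. (norm (cv_err t i))\<^sup>2)"
definition noise_run :: "nat \<Rightarrow> real" where "noise_run t = (1 / real N) * (\<Sum>i<N. e_sum_sq t i / (real K)\<^sup>2)"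
definition noise_end :: "nat \<Rightarrow> real"
  where "noise_end t = (1 / real N) * (\<Sum>i<N. (norm (e_sum t i K))\<^sup>2 / (real K)\<^sup>2)"
definition v_err :: "nat \<Rightarrow> real" where "v_err t = (norm (v_avg t - gradf (z_iter t)))\<^sup>2"
definition grad_sq :: "nat \<Rightarrow> real" where "grad_sq t = (norm (gradf (z_iter t)))\<^sup>2"
definition step_sq :: "nat \<Rightarrow> real" where "step_sq t = (norm (z_iter (Suc t) - z_iter t))\<^sup>2"
definition pgrad_sq :: "nat \<Rightarrow> real" where "pgrad_sq t = (norm (Gmap h \<alpha> (z_iter t) (gradf (z_iter t))))\<^sup>2"
definition drift_part :: "nat \<Rightarrow> nat \<Rightarrow> 'a"
  where "drift_part t i = (1 / real K) *\<^sub>R (\<Sum>k<K. gf i (x_loc t i k) - gf i (z_iter t))"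
definition noise_part :: "nat \<Rightarrow> nat \<Rightarrow> 'a" where "noise_part t i = (1 / real K) *\<^sub>R e_sum t i K"

lemma v_loc_split: "v_loc t i = gf i (z_iter t) + drift_part t i + noise_part t i"
proof -
  have "(\<Sum>k<K. g_loc t i k) = (\<Sum>k<K. gf i (x_loc t i k) - gf i (z_iter t)) + real K *\<^sub>R gf i (z_iter t) + e_sum t i K"
    unfolding e_sum_def e_loc_def by (simp add: sum.distrib sum_subtractf sum_constant_scaleR)
  thus ?thesis unfolding v_loc_def drift_part_def noise_part_def using K_pos by (simp add: scaleR_add_right)
qed

lemma v_avg_error_split:
  "v_avg t - gradf (z_iter t) = (1 / real N) *\<^sub>R (\<Sum>i<N. drift_part t i) + (1 / real N) *\<^sub>R (\<Sum>i<N. noise_part t i)"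
  unfolding v_avg_def gradf_def v_loc_split by (simp add: sum.distrib algebra_simps)

lemma drift_part_bound:
  assumes i: "i < N"
  shows "(norm (drift_part t i))\<^sup>2 \<le> (drift_src t i + e_sum_sq t i / (real K)\<^sup>2) / 300"
proof -
  have "(norm (drift_part t i))\<^sup>2 \<le> (1 / real K) * (\<Sum>k<K. (norm (gf i (x_loc t i k) - gf i (z_iter t)))\<^sup>2)"
    unfolding drift_part_def by (rule power2_norm_mean_le[OF K_pos])
  also have "\<dots> \<le> (1 / real K) * (\<Sum>k<K. L\<^sup>2 * (norm (x_loc t i k - z_iter t))\<^sup>2)"
    using gf_diff_sq_le[OF i] by (intro mult_left_mono sum_mono) auto
  also have "\<dots> = L\<^sup>2 * drift t i / real K" unfolding drift_def by (simp add: sum_distrib_left sum_divide_distrib)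
  also have "\<dots> \<le> (drift_src t i + e_sum_sq t i / (real K)\<^sup>2) / 300" by (rule drift_bound[OF i])
  finally show ?thesis .
qed

lemma mean_drift_src_eq:
  "(1 / real N) * (\<Sum>i<N. drift_src t i + e_sum_sq t i / (real K)\<^sup>2) = cv_sq t + grad_sq t + noise_run t"
  unfolding drift_src_def cv_sq_def grad_sq_def noise_run_def using N_pos
  by (simp add: sum.distrib algebra_simps)

lemma power2_norm_noise_part: "(norm (noise_part t i))\<^sup>2 = (norm (e_sum t i K))\<^sup>2 / (real K)\<^sup>2"
  unfolding noise_part_def by (simp add: power_divide)

lemma v_err_bound: "v_err t \<le> (cv_sq t + grad_sq t + noise_run t) / 150 + 2 * noise_end t"
proof -
  have "(norm ((1 / real N) *\<^sub>R (\<Sum>i<N. drift_part t i)))\<^sup>2 \<le> (1 / real N) * (\<Sum>i<N. (norm (drift_part t i))\<^sup>2)"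
    by (rule power2_norm_mean_le[OF N_pos])
  also have "\<dots> \<le> (1 / real N) * (\<Sum>i<N. (drift_src t i + e_sum_sq t i / (real K)\<^sup>2) / 300)"
    using drift_part_bound by (intro mult_left_mono sum_mono) auto
  also have "\<dots> = (cv_sq t + grad_sq t + noise_run t) / 300"
    unfolding mean_drift_src_eq[symmetric] by (simp add: sum_divide_distrib mult.commute)
  finally have "(norm ((1 / real N) *\<^sub>R (\<Sum>i<N. drift_part t i)))\<^sup>2 \<le> (cv_sq t + grad_sq t + noise_run t) / 300" .
  moreover have "(norm ((1 / real N) *\<^sub>R (\<Sum>i<N. noise_part t i)))\<^sup>2 \<le> noise_end t"
    using power2_norm_mean_le[OF N_pos, of "noise_part t"] unfolding noise_end_def power2_norm_noise_part .
  moreover have "v_err t \<le> 2 * (norm ((1 / real N) *\<^sub>R (\<Sum>i<N. drift_part t i)))\<^sup>2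
                            + 2 * (norm ((1 / real N) *\<^sub>R (\<Sum>i<N. noise_part t i)))\<^sup>2"
    unfolding v_err_def v_avg_error_split by (rule power2_norm_add_le)
  ultimately show ?thesis by linarith
qed

text \<open>Since \<open>c\<^sub>i\<^sup>t\<^sup>+\<^sup>1 = v\<^sup>t - v\<^sub>i\<^sup>t\<close>, the control-variate error at round \<open>t + 1\<close> is the deviation
  from the mean of \<open>\<nabla>f\<^sub>i(z\<^sup>t\<^sup>+\<^sup>1) - v\<^sub>i\<^sup>t\<close>, whose size is controlled by the step, the drift and the noise.\<close>
lemma cv_sq_Suc_bound:
  "cv_sq (Suc t) \<le> 3 * L\<^sup>2 * step_sq t + (cv_sq t + grad_sq t + noise_run t) / 100 + 3 * noise_end t"
proof -
  define X where "X i = gf i (z_iter (Suc t)) - v_loc t i" for i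
  have mean_X: "(1 / real N) *\<^sub>R (\<Sum>j<N. X j) = gradf (z_iter (Suc t)) - v_avg t"
    unfolding X_def gradf_def v_avg_def by (simp add: sum_subtractf scaleR_diff_right)
  have "cv_err (Suc t) i = X i - (1 / real N) *\<^sub>R (\<Sum>j<N. X j)" for i
    unfolding mean_X by (simp add: cv_err_def c_iter_Suc X_def algebra_simps)
  hence "cv_sq (Suc t) = (1 / real N) * (\<Sum>i<N. (norm (X i - (1 / real N) *\<^sub>R (\<Sum>j<N. X j)))\<^sup>2)"
    unfolding cv_sq_def by simp
  also have "\<dots> \<le> (1 / real N) * (\<Sum>i<N. (norm (X i))\<^sup>2)" by (rule mean_power2_norm_deviation_le[OF N_pos])
  also have "\<dots> \<le> (1 / real N) * (\<Sum>i<N. 3 * (L\<^sup>2 * step_sq t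
                   + (drift_src t i + e_sum_sq t i / (real K)\<^sup>2) / 300 + (norm (e_sum t i K))\<^sup>2 / (real K)\<^sup>2))"
  proof (intro mult_left_mono sum_mono)
    fix i assume "i \<in> {..<N}"
    hence i: "i < N" by simp
    have "X i = (gf i (z_iter (Suc t)) - gf i (z_iter t)) + (- drift_part t i) + (- noise_part t i)"
      unfolding X_def v_loc_split by simp
    hence "(norm (X i))\<^sup>2 \<le> 3 * ((norm (gf i (z_iter (Suc t)) - gf i (z_iter t)))\<^sup>2
                                + (norm (drift_part t i))\<^sup>2 + (norm (noise_part t i))\<^sup>2)"
      using power2_norm_add3_le[of "gf i (z_iter (Suc t)) - gf i (z_iter t)" "- drift_part t i" "- noise_part t i"]
      by simp
    also have "\<dots> \<le> 3 * (L\<^sup>2 * step_sq t + (drift_src t i + e_sum_sq t i / (real K)\<^sup>2) / 300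
                          + (norm (e_sum t i K))\<^sup>2 / (real K)\<^sup>2)"
      using gf_diff_sq_le[OF i] drift_part_bound[OF i] unfolding step_sq_def power2_norm_noise_part
      by (intro mult_left_mono add_mono) auto
    finally show "(norm (X i))\<^sup>2 \<le> \<dots>" .
  qed simp
  also have "\<dots> = 3 * L\<^sup>2 * step_sq t
                  + (1 / real N) * (\<Sum>i<N. drift_src t i + e_sum_sq t i / (real K)\<^sup>2) / 100 + 3 * noise_end t"
  proof -
    have "(\<Sum>i<N. 3 * (L\<^sup>2 * step_sq t + (drift_src t i + e_sum_sq t i / (real K)\<^sup>2) / 300
                       + (norm (e_sum t i K))\<^sup>2 / (real K)\<^sup>2))
            = 3 * (real N * (L\<^sup>2 * step_sq t)) + (\<Sum>i<N. drift_src t i + e_sum_sq t i / (real K)\<^sup>2) / 100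
              + 3 * (\<Sum>i<N. (norm (e_sum t i K))\<^sup>2 / (real K)\<^sup>2)"
      by (simp add: sum.distrib sum_distrib_left[symmetric] sum_divide_distrib[symmetric])
    thus ?thesis unfolding noise_end_def using N_pos by (simp add: field_simps)
  qed
  finally show ?thesis unfolding mean_drift_src_eq by simp
qed

lemma \<alpha>\<rho>_le_half: "\<alpha> * \<rho> \<le> 1 / 2"
  using \<alpha>_step L_nonneg \<alpha>_pos by (simp add: distrib_left) (smt (verit) mult_nonneg_nonneg zero_le_power2)

lemma pgrad_sq_bound: "pgrad_sq t \<le> 2 * (step_sq t / \<alpha>\<^sup>2) + 8 * v_err t"
proof -
  define p where "p = prox h \<alpha> (z_iter t - \<alpha> *\<^sub>R gradf (z_iter t))"
  have "norm (z_iter (Suc t) - p) \<le> norm ((z_iter t - \<alpha> *\<^sub>R v_avg t) - (z_iter t - \<alpha> *\<^sub>R gradf (z_iter t))) / (1 - \<alpha> * \<rho>)"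
    unfolding z_iter_Suc p_def by (rule prox_lipschitz)
  also have "\<dots> = \<alpha> * norm (v_avg t - gradf (z_iter t)) / (1 - \<alpha> * \<rho>)"
    using \<alpha>_pos by (simp add: norm_minus_commute flip: scaleR_diff_right)
  also have "\<dots> \<le> \<alpha> * norm (v_avg t - gradf (z_iter t)) / (1 / 2)"
    using \<alpha>\<rho>_le_half \<alpha>_pos by (intro divide_left_mono) auto
  finally have "norm (z_iter (Suc t) - p) / \<alpha> \<le> 2 * norm (v_avg t - gradf (z_iter t))"
    using \<alpha>_pos by (simp add: pos_divide_le_eq mult_ac)
  hence "norm ((1 / \<alpha>) *\<^sub>R (z_iter (Suc t) - p)) \<le> 2 * norm (v_avg t - gradf (z_iter t))"
    using \<alpha>_pos by simp
  hence "(norm ((1 / \<alpha>) *\<^sub>R (z_iter (Suc t) - p)))\<^sup>2 \<le> 4 * v_err t"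
    unfolding v_err_def using power_mono[of _ _ 2] by (fastforce simp: power_mult_distrib)
  moreover have "Gmap h \<alpha> (z_iter t) (gradf (z_iter t))
                   = (1 / \<alpha>) *\<^sub>R (z_iter t - z_iter (Suc t)) + (1 / \<alpha>) *\<^sub>R (z_iter (Suc t) - p)"
    unfolding Gmap_def p_def by (simp add: algebra_simps)
  hence "pgrad_sq t \<le> 2 * (norm ((1 / \<alpha>) *\<^sub>R (z_iter t - z_iter (Suc t))))\<^sup>2
                         + 2 * (norm ((1 / \<alpha>) *\<^sub>R (z_iter (Suc t) - p)))\<^sup>2"
    unfolding pgrad_sq_def by (metis power2_norm_add_le)
  moreover have "(norm ((1 / \<alpha>) *\<^sub>R (z_iter t - z_iter (Suc t))))\<^sup>2 = step_sq t / \<alpha>\<^sup>2"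
    unfolding step_sq_def using \<alpha>_pos by (simp add: power_divide norm_minus_commute)
  ultimately show ?thesis by linarith
qed

lemma grad_sq_bound: "grad_sq t \<le> 2 * pgrad_sq t + 2 * Bh"
proof -
  define y where "y = z_iter t - \<alpha> *\<^sub>R gradf (z_iter t)"
  define v where "v = (1 / \<alpha>) *\<^sub>R (y - prox h \<alpha> y)"
  have "(norm v)\<^sup>2 \<le> Bh" unfolding v_def by (rule subdiff_bound[OF prox_residual_in_subdiff])
  moreover have "gradf (z_iter t) = Gmap h \<alpha> (z_iter t) (gradf (z_iter t)) + (- v)"
    unfolding Gmap_def v_def y_def using \<alpha>_pos by (simp add: algebra_simps)
  hence "grad_sq t \<le> 2 * pgrad_sq t + 2 * (norm (- v))\<^sup>2"
    unfolding grad_sq_def pgrad_sq_def by (metis power2_norm_add_le)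
  ultimately show ?thesis by simp
qed

definition h_val :: "nat \<Rightarrow> real" where "h_val t = real_of_ereal (h (z_iter t))"
definition phi_val :: "nat \<Rightarrow> real" where "phi_val t = fbar (z_iter t) + h_val t"

context
  assumes h_z0: "h z0 \<noteq> \<infinity>"
begin

lemma h_z_iter: "h (z_iter t) = ereal (h_val t)"
proof (cases t)
  case 0 thus ?thesis using h_z0 h_neq_minf[of z0] by (cases "h z0") (auto simp: h_val_def z_iter_0)
next
  case (Suc t')
  obtain r where "h (prox h \<alpha> (z_iter t' - \<alpha> *\<^sub>R v_avg t')) = ereal r" by (rule h_prox_real)
  thus ?thesis unfolding h_val_def Suc z_iter_Suc by simp
qed

lemma phi_val_ge: "\<phi>min \<le> phi_val t"
  using h_ge[of "z_iter t"] unfolding h_z_iter phi_val_def by simp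

lemma h_val_Suc_le:
  "h_val (Suc t) + step_sq t / \<alpha> + inner (z_iter (Suc t) - z_iter t) (v_avg t) - \<rho> * step_sq t / 2 \<le> h_val t"
proof -
  define d where "d = z_iter (Suc t) - z_iter t"
  define v where "v = v_avg t"
  define y where "y = z_iter t - \<alpha> *\<^sub>R v"
  define Da where "Da = step_sq t / \<alpha>"
  have growth: "h_val (Suc t) + (norm (z_iter (Suc t) - y))\<^sup>2 / (2 * \<alpha>) + (1 / \<alpha> - \<rho>) / 2 * (norm (z_iter t - z_iter (Suc t)))\<^sup>2
          \<le> h_val t + (norm (z_iter t - y))\<^sup>2 / (2 * \<alpha>)"
    using prox_quadratic_growth[OF h_z_iter h_z_iter[of "Suc t", unfolded z_iter_Suc]]
    unfolding y_def v_def z_iter_Suc .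
  have "z_iter (Suc t) - y = d + \<alpha> *\<^sub>R v" unfolding d_def y_def by simp
  hence "(norm (z_iter (Suc t) - y))\<^sup>2 = step_sq t + 2 * \<alpha> * inner d v + \<alpha>\<^sup>2 * (norm v)\<^sup>2"
    unfolding step_sq_def d_def[symmetric]
    by (simp only: power2_norm_eq_inner)
       (simp add: inner_add_left inner_add_right inner_commute algebra_simps power2_eq_square)
  hence e1: "(norm (z_iter (Suc t) - y))\<^sup>2 / (2 * \<alpha>) = Da / 2 + inner d v + \<alpha> * (norm v)\<^sup>2 / 2"
    unfolding Da_def using \<alpha>_pos by (simp add: field_simps power2_eq_square)
  have e2: "(norm (z_iter t - y))\<^sup>2 / (2 * \<alpha>) = \<alpha> * (norm v)\<^sup>2 / 2"
    unfolding y_def using \<alpha>_pos by (simp add: power_mult_distrib power2_eq_square)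
  have e3: "(1 / \<alpha> - \<rho>) / 2 * (norm (z_iter t - z_iter (Suc t)))\<^sup>2 = Da / 2 - \<rho> * step_sq t / 2"
    unfolding Da_def step_sq_def by (simp add: norm_minus_commute algebra_simps diff_divide_distrib)
  have "h_val (Suc t) + Da + inner d v - \<rho> * step_sq t / 2 \<le> h_val t"
    using growth unfolding e1 e2 e3 by linarith
  thus ?thesis unfolding Da_def d_def v_def .
qed

lemma phi_val_descent: "phi_val (Suc t) \<le> phi_val t + \<alpha> * v_err t - step_sq t / (2 * \<alpha>)"
proof -
  define d where "d = z_iter (Suc t) - z_iter t"
  define g where "g = gradf (z_iter t)"
  have "fbar (z_iter (Suc t)) \<le> fbar (z_iter t) + inner g d + L / 2 * step_sq t"
    unfolding g_def d_def step_sq_def by (rule f_upper)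
  moreover have "- inner d (v_avg t - g) \<le> step_sq t / (4 * \<alpha>) + \<alpha> * v_err t"
    using inner_le_young[OF \<alpha>_pos] unfolding step_sq_def v_err_def d_def g_def .
  moreover have "inner d (v_avg t - g) = inner d (v_avg t) - inner g d"
    by (simp add: inner_diff_right inner_commute)
  moreover have "(\<rho> + L) * step_sq t \<le> 1 / (2 * \<alpha>) * step_sq t"
  proof (rule mult_right_mono)
    have "\<alpha> * (\<rho> + L) \<le> 1 / 2" using \<alpha>_step by (smt (verit) zero_le_power2 mult_nonneg_nonneg)
    thus "\<rho> + L \<le> 1 / (2 * \<alpha>)" using \<alpha>_pos by (simp add: field_simps)
  qed (simp add: step_sq_def)
  moreover have "1 / (2 * \<alpha>) * step_sq t = step_sq t / \<alpha> / 2" by simp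
  moreover have "step_sq t / (4 * \<alpha>) = step_sq t / \<alpha> / 4" by simp
  moreover have "step_sq t / (2 * \<alpha>) = step_sq t / \<alpha> / 2" by simp
  ultimately show ?thesis
    using h_val_Suc_le[of t] unfolding phi_val_def d_def by (simp add: algebra_simps)
qed

lemma sum_step_sq_bound:
  "(\<Sum>t<T. step_sq t / \<alpha>\<^sup>2) \<le> 2 * ((phi_val 0 - \<phi>min) / \<alpha>) + 2 * (\<Sum>t<T. v_err t)"
proof -
  have "phi_val T - phi_val 0 = (\<Sum>t<T. phi_val (Suc t) - phi_val t)" by (rule sum_lessThan_telescope[symmetric])
  also have "\<dots> \<le> (\<Sum>t<T. \<alpha> * v_err t - \<alpha> / 2 * (step_sq t / \<alpha>\<^sup>2))"
    using phi_val_descent \<alpha>_pos by (intro sum_mono) (simp add: power2_eq_square field_simps)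
  finally have "\<alpha> / 2 * (\<Sum>t<T. step_sq t / \<alpha>\<^sup>2) \<le> \<alpha> * (\<Sum>t<T. v_err t) + (phi_val 0 - \<phi>min)"
    using phi_val_ge[of T] by (simp add: sum_subtractf sum_distrib_left)
  thus ?thesis using \<alpha>_pos by (simp add: field_simps)
qed

end

lemma sum_cv_sq_bound:
  "(\<Sum>t<T. cv_sq t) \<le> cv_sq 0 + 3 / 8 * (\<Sum>t<T. step_sq t / \<alpha>\<^sup>2)
     + ((\<Sum>t<T. cv_sq t) + (\<Sum>t<T. grad_sq t) + (\<Sum>t<T. noise_run t)) / 100 + 3 * (\<Sum>t<T. noise_end t)"
proof -
  have "0 \<le> \<alpha> * (\<rho> + L)" using \<alpha>_pos \<rho>_nonneg L_nonneg by simp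
  hence "\<alpha>\<^sup>2 * L\<^sup>2 \<le> 1 / 8" using \<alpha>_step by linarith
  hence L2: "L\<^sup>2 \<le> 1 / 8 / \<alpha>\<^sup>2" using \<alpha>_pos by (simp add: pos_le_divide_eq mult.commute)
  have "3 * L\<^sup>2 * step_sq t \<le> 3 / 8 * (step_sq t / \<alpha>\<^sup>2)" for t
  proof -
    have "L\<^sup>2 * step_sq t \<le> 1 / 8 / \<alpha>\<^sup>2 * step_sq t" using L2 by (rule mult_right_mono) (simp add: step_sq_def)
    thus ?thesis by simp
  qed
  hence "cv_sq (Suc t) \<le> 3 / 8 * (step_sq t / \<alpha>\<^sup>2) + (cv_sq t + grad_sq t + noise_run t) / 100 + 3 * noise_end t" for t
    using cv_sq_Suc_bound[of t] by (smt (verit))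
  hence "(\<Sum>t<T. cv_sq (Suc t))
           \<le> (\<Sum>t<T. 3 / 8 * (step_sq t / \<alpha>\<^sup>2) + (cv_sq t + grad_sq t + noise_run t) / 100 + 3 * noise_end t)"
    by (rule sum_mono)
  also have "\<dots> = 3 / 8 * (\<Sum>t<T. step_sq t / \<alpha>\<^sup>2)
        + ((\<Sum>t<T. cv_sq t) + (\<Sum>t<T. grad_sq t) + (\<Sum>t<T. noise_run t)) / 100 + 3 * (\<Sum>t<T. noise_end t)"
    by (simp add: sum.distrib sum_distrib_left[symmetric] sum_divide_distrib[symmetric])
  finally have "(\<Sum>t<T. cv_sq (Suc t)) \<le> \<dots>" .
  moreover have "(\<Sum>t<T. cv_sq t) + cv_sq T = cv_sq 0 + (\<Sum>t<T. cv_sq (Suc t))"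
    using sum.lessThan_Suc_shift[of cv_sq T] by simp
  moreover have "cv_sq T \<ge> 0" by (simp add: cv_sq_def sum_nonneg)
  ultimately show ?thesis by linarith
qed

lemma Bh_nonneg: "Bh \<ge> 0"
  using subdiff_bound[OF prox_residual_in_subdiff, of z0] by (meson order_trans zero_le_power2)

lemma path_bound:
  assumes "h z0 \<noteq> \<infinity>"
  shows "(\<Sum>t<T. pgrad_sq t) \<le> 8 * ((phi_val 0 - \<phi>min) / \<alpha>) + 8 * cv_sq 0 + real T * Bh
           + (\<Sum>t<T. noise_run t) / 8 + 50 * (\<Sum>t<T. noise_end t)"
proof (rule solve_path_inequalities)
  show "(\<Sum>t<T. pgrad_sq t) \<le> 2 * (\<Sum>t<T. step_sq t / \<alpha>\<^sup>2) + 8 * (\<Sum>t<T. v_err t)"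
    using sum_mono[of "{..<T}" pgrad_sq, OF pgrad_sq_bound] by (simp add: sum.distrib sum_distrib_left)
  show "(\<Sum>t<T. v_err t)
          \<le> ((\<Sum>t<T. cv_sq t) + (\<Sum>t<T. grad_sq t) + (\<Sum>t<T. noise_run t)) / 150 + 2 * (\<Sum>t<T. noise_end t)"
    using sum_mono[of "{..<T}" v_err, OF v_err_bound]
    by (simp add: sum.distrib sum_distrib_left[symmetric] sum_divide_distrib[symmetric])
  show "(\<Sum>t<T. grad_sq t) \<le> 2 * (\<Sum>t<T. pgrad_sq t) + 2 * (real T * Bh)"
    using sum_mono[of "{..<T}" grad_sq, OF grad_sq_bound] by (simp add: sum.distrib sum_distrib_left)
  show "(\<Sum>t<T. step_sq t / \<alpha>\<^sup>2) \<le> 2 * ((phi_val 0 - \<phi>min) / \<alpha>) + 2 * (\<Sum>t<T. v_err t)"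
    using sum_step_sq_bound[OF assms] .
  show "(phi_val 0 - \<phi>min) / \<alpha> \<ge> 0" using phi_val_ge[OF assms] \<alpha>_pos by simp
  show "cv_sq 0 \<ge> 0" "(\<Sum>t<T. noise_run t) \<ge> 0" "(\<Sum>t<T. noise_end t) \<ge> 0" "real T * Bh \<ge> 0"
    using Bh_nonneg unfolding cv_sq_def noise_run_def noise_end_def e_sum_sq_def
    by (auto intro!: sum_nonneg divide_nonneg_nonneg)
qed (rule sum_cv_sq_bound)

end

section \<open>Sampling errors on the product space\<close>

lemma abs_inner_le_sum_power2: "\<bar>inner (a::'a::real_inner) b\<bar> \<le> (norm a)\<^sup>2 + (norm b)\<^sup>2"
proof -
  have "\<bar>inner a b\<bar> \<le> norm a * norm b" by (rule Cauchy_Schwarz_ineq2)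
  also have "\<dots> \<le> (norm a)\<^sup>2 + (norm b)\<^sup>2"
    using sum_squares_bound[of "norm a" "norm b"] mult_nonneg_nonneg[OF norm_ge_zero norm_ge_zero, of a b]
    by linarith
  finally show ?thesis .
qed

text \<open>A coordinate \<open>q\<close> of a product of probability spaces that the state \<open>X\<close> does not depend on:
  the noise \<open>g (X s) (s q) - gm (X s)\<close> then has mean zero given all other coordinates, so it is
  orthogonal to every square-integrable \<open>F\<close> that does not depend on \<open>q\<close> either.\<close>
locale fresh_coordinate = product_prob_space Mf I
  for Mf :: "'j \<Rightarrow> 'b measure" and I :: "'j set" +
  fixes q :: 'j and g :: "'a::euclidean_space \<Rightarrow> 'b \<Rightarrow> 'a" and gm :: "'a \<Rightarrow> 'a"
    and var :: real and X :: "('j \<Rightarrow> 'b) \<Rightarrow> 'a"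
  assumes finite_I: "finite I" and q_in_I: "q \<in> I"
    and g_measurable: "(\<lambda>(x, y). g x y) \<in> borel_measurable (borel \<Otimes>\<^sub>M Mf q)"
    and g_integrable: "\<And>x. integrable (Mf q) (g x)"
    and g_mean: "\<And>x. (\<integral>y. g x y \<partial>Mf q) = gm x"
    and g_variance: "\<And>x. (\<integral>\<^sup>+y. ennreal ((norm (g x y - gm x))\<^sup>2) \<partial>Mf q) \<le> ennreal var"
    and var_nonneg: "var \<ge> 0"
    and gm_measurable: "gm \<in> borel_measurable borel"
    and X_measurable: "X \<in> borel_measurable (Pi\<^sub>M I Mf)"
    and X_upd_q: "\<And>s y. X (s(q := y)) = X s"
begin

definition noise :: "('j \<Rightarrow> 'b) \<Rightarrow> 'a" where "noise s = g (X s) (s q) - gm (X s)"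

lemma noise_upd_q: "noise (s(q := y)) = g (X s) y - gm (X s)"
  unfolding noise_def X_upd_q by simp

lemma noise_measurable: "noise \<in> borel_measurable (Pi\<^sub>M I Mf)"
proof -
  have [measurable]: "(\<lambda>s. s q) \<in> Pi\<^sub>M I Mf \<rightarrow>\<^sub>M Mf q" using q_in_I by (rule measurable_component_singleton)
  have "(\<lambda>s. (X s, s q)) \<in> Pi\<^sub>M I Mf \<rightarrow>\<^sub>M borel \<Otimes>\<^sub>M Mf q" using X_measurable by measurable
  hence "(\<lambda>s. (\<lambda>(x, y). g x y) (X s, s q)) \<in> borel_measurable (Pi\<^sub>M I Mf)"
    using g_measurable by (rule measurable_compose)
  moreover have "(\<lambda>s. gm (X s)) \<in> borel_measurable (Pi\<^sub>M I Mf)"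
    using X_measurable gm_measurable by (rule measurable_compose)
  ultimately show ?thesis unfolding noise_def by simp
qed

lemma nn_integral_noise_sq_le: "(\<integral>\<^sup>+s. ennreal ((norm (noise s))\<^sup>2) \<partial>Pi\<^sub>M I Mf) \<le> ennreal var"
proof -
  have "(\<integral>\<^sup>+s. ennreal ((norm (noise s))\<^sup>2) \<partial>Pi\<^sub>M I Mf)
          = (\<integral>\<^sup>+s. (\<integral>\<^sup>+y. ennreal ((norm (noise (s(q := y))))\<^sup>2) \<partial>Mf q) \<partial>Pi\<^sub>M (I - {q}) Mf)"
    using product_nn_integral_insert[of "I - {q}" q] noise_measurable finite_I
    unfolding insert_Diff[OF q_in_I] by simp
  also have "\<dots> \<le> (\<integral>\<^sup>+s. ennreal var \<partial>Pi\<^sub>M (I - {q}) Mf)"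
    by (intro nn_integral_mono) (simp add: noise_upd_q g_variance)
  also have "\<dots> = ennreal var"
  proof -
    have "prob_space (Pi\<^sub>M (I - {q}) Mf)" by (intro prob_space_PiM prob_space)
    thus ?thesis by (simp add: prob_space.emeasure_space_1)
  qed
  finally show ?thesis .
qed

lemma integrable_noise_sq: "integrable (Pi\<^sub>M I Mf) (\<lambda>s. (norm (noise s))\<^sup>2)"
  using noise_measurable nn_integral_noise_sq_le
  by (intro integrableI_bounded) (auto simp: le_less_trans)

lemma integral_noise_sq_le: "(\<integral>s. (norm (noise s))\<^sup>2 \<partial>Pi\<^sub>M I Mf) \<le> var"
proof -
  have "ennreal (\<integral>s. (norm (noise s))\<^sup>2 \<partial>Pi\<^sub>M I Mf) = (\<integral>\<^sup>+s. ennreal ((norm (noise s))\<^sup>2) \<partial>Pi\<^sub>M I Mf)"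
    using integrable_noise_sq by (intro nn_integral_eq_integral[symmetric]) auto
  also have "\<dots> \<le> ennreal var" by (rule nn_integral_noise_sq_le)
  finally show ?thesis using var_nonneg by simp
qed

context
  fixes F :: "('j \<Rightarrow> 'b) \<Rightarrow> 'a"
  assumes F_measurable: "F \<in> borel_measurable (Pi\<^sub>M I Mf)"
    and F_upd_q: "\<And>s y. F (s(q := y)) = F s"
    and integrable_F_sq: "integrable (Pi\<^sub>M I Mf) (\<lambda>s. (norm (F s))\<^sup>2)"
begin

lemma integrable_inner_noise: "integrable (Pi\<^sub>M I Mf) (\<lambda>s. inner (F s) (noise s))"
proof (rule Bochner_Integration.integrable_bound)
  show "integrable (Pi\<^sub>M I Mf) (\<lambda>s. (norm (F s))\<^sup>2 + (norm (noise s))\<^sup>2)"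
    using integrable_F_sq integrable_noise_sq by simp
  show "(\<lambda>s. inner (F s) (noise s)) \<in> borel_measurable (Pi\<^sub>M I Mf)"
    using F_measurable noise_measurable by measurable
qed (use abs_inner_le_sum_power2 in auto)

lemma integral_inner_noise_eq_0: "(\<integral>s. inner (F s) (noise s) \<partial>Pi\<^sub>M I Mf) = 0"
proof -
  have mean_zero: "(\<integral>y. g x y - gm x \<partial>Mf q) = 0" for x
    using g_integrable g_mean M.prob_space[of q] by (simp add: Bochner_Integration.integral_diff)
  have "(\<integral>s. inner (F s) (noise s) \<partial>Pi\<^sub>M I Mf)
          = (\<integral>s. (\<integral>y. inner (F (s(q := y))) (noise (s(q := y))) \<partial>Mf q) \<partial>Pi\<^sub>M (I - {q}) Mf)"
    using product_integral_insert[of "I - {q}" q] integrable_inner_noise finite_I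
    unfolding insert_Diff[OF q_in_I] by simp
  also have "\<dots> = (\<integral>s. inner (F s) (\<integral>y. g (X s) y - gm (X s) \<partial>Mf q) \<partial>Pi\<^sub>M (I - {q}) Mf)"
    using g_integrable by (simp add: F_upd_q noise_upd_q integral_inner_right)
  finally show ?thesis by (simp add: mean_zero)
qed

lemma sq_norm_add_noise:
  shows integrable_sq_norm_add_noise: "integrable (Pi\<^sub>M I Mf) (\<lambda>s. (norm (F s + noise s))\<^sup>2)"
    and integral_sq_norm_add_noise_le:
      "(\<integral>s. (norm (F s + noise s))\<^sup>2 \<partial>Pi\<^sub>M I Mf) \<le> (\<integral>s. (norm (F s))\<^sup>2 \<partial>Pi\<^sub>M I Mf) + var"
proof -
  have expand: "(norm (F s + noise s))\<^sup>2 = (norm (F s))\<^sup>2 + 2 * inner (F s) (noise s) + (norm (noise s))\<^sup>2" for s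
    by (simp only: power2_norm_eq_inner) (simp add: inner_add_left inner_add_right inner_commute)
  show "integrable (Pi\<^sub>M I Mf) (\<lambda>s. (norm (F s + noise s))\<^sup>2)"
    unfolding expand using integrable_F_sq integrable_inner_noise integrable_noise_sq by simp
  have "(\<integral>s. (norm (F s + noise s))\<^sup>2 \<partial>Pi\<^sub>M I Mf)
          = (\<integral>s. (norm (F s))\<^sup>2 \<partial>Pi\<^sub>M I Mf) + 2 * (\<integral>s. inner (F s) (noise s) \<partial>Pi\<^sub>M I Mf)
            + (\<integral>s. (norm (noise s))\<^sup>2 \<partial>Pi\<^sub>M I Mf)"
    unfolding expand using integrable_F_sq integrable_inner_noise integrable_noise_sq by simp
  thus "(\<integral>s. (norm (F s + noise s))\<^sup>2 \<partial>Pi\<^sub>M I Mf) \<le> (\<integral>s. (norm (F s))\<^sup>2 \<partial>Pi\<^sub>M I Mf) + var"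
    using integral_inner_noise_eq_0 integral_noise_sq_le by simp
qed

end

end

lemma local_iter_cong:
  "(\<And>j x. j < k \<Longrightarrow> g j x = g' j x) \<Longrightarrow> local_iter g \<beta> c z k = local_iter g' \<beta> c z k"
  by (induction k) auto

lemma mb_grad_cong:
  "(\<And>b. b < B \<Longrightarrow> s t i k b = s' t i k b) \<Longrightarrow> mb_grad gF B s t i k x = mb_grad gF B s' t i k x"
  unfolding mb_grad_def by simp

lemma fedcanon_cong:
  assumes "\<And>t' i k b. t' < t \<Longrightarrow> i < N \<Longrightarrow> k < K \<Longrightarrow> b < B \<Longrightarrow> s t' i k b = s' t' i k b"
  shows "fst (fedcanon gF h N K B \<alpha> \<beta> z0 c0 s t) = fst (fedcanon gF h N K B \<alpha> \<beta> z0 c0 s' t) \<and>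
         (\<forall>i<N. snd (fedcanon gF h N K B \<alpha> \<beta> z0 c0 s t) i = snd (fedcanon gF h N K B \<alpha> \<beta> z0 c0 s' t) i)"
  using assms
proof (induction t)
  case 0 thus ?case by simp
next
  case (Suc t)
  define z where "z = fst (fedcanon gF h N K B \<alpha> \<beta> z0 c0 s t)"
  define c where "c = snd (fedcanon gF h N K B \<alpha> \<beta> z0 c0 s t)"
  define c' where "c' = snd (fedcanon gF h N K B \<alpha> \<beta> z0 c0 s' t)"
  have IH: "fst (fedcanon gF h N K B \<alpha> \<beta> z0 c0 s' t) = z" "\<And>i. i < N \<Longrightarrow> c' i = c i"
    using Suc unfolding z_def c_def c'_def by auto
  have step_eq: "local_iter (mb_grad gF B s t i) \<beta> (c i) z K = local_iter (mb_grad gF B s' t i) \<beta> (c' i) z K"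
    if "i < N" for i
    using Suc.prems that IH(2)[OF that] by (auto intro!: local_iter_cong mb_grad_cong)
  have "(\<Sum>i<N. (1 / (\<beta> * real K)) *\<^sub>R (z - local_iter (mb_grad gF B s t i) \<beta> (c i) z K))
          = (\<Sum>i<N. (1 / (\<beta> * real K)) *\<^sub>R (z - local_iter (mb_grad gF B s' t i) \<beta> (c' i) z K))"
    using step_eq by (intro sum.cong) auto
  thus ?case using step_eq IH unfolding z_def c_def c'_def by (simp add: Let_def)
qed

lemma sum_lessThan_mult_div_mod:
  fixes g :: "nat \<Rightarrow> nat \<Rightarrow> 'a::comm_monoid_add"
  assumes "B > 0"
  shows "(\<Sum>p<k * B. g (p div B) (p mod B)) = (\<Sum>j<k. \<Sum>b<B. g j b)"
proof -
  have "(\<Sum>p\<in>{j * B..<j * B + B}. g (p div B) (p mod B)) = (\<Sum>b<B. g j b)" for j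
  proof -
    have "(\<Sum>p\<in>{j * B..<j * B + B}. g (p div B) (p mod B)) = (\<Sum>b\<in>{0..<B}. g ((b + j * B) div B) ((b + j * B) mod B))"
      using sum.shift_bounds_nat_ivl[of "\<lambda>p. g (p div B) (p mod B)" 0 "j * B" B] by (simp add: add.commute)
    also have "\<dots> = (\<Sum>b<B. g j b)" using assms by (intro sum.cong) (auto simp: atLeast0LessThan)
    finally show ?thesis .
  qed
  thus ?thesis using sum.nat_group[of "\<lambda>p. g (p div B) (p mod B)" B k] by simp
qed

locale fedcanon_sampling =
  fixes h :: "'a::euclidean_space \<Rightarrow> ereal" and \<rho> \<alpha> L \<phi>min :: real
    and fbar :: "'a \<Rightarrow> real" and gradf :: "'a \<Rightarrow> 'a"
    and N K B :: nat and gf :: "nat \<Rightarrow> 'a \<Rightarrow> 'a" and gF :: "nat \<Rightarrow> 'a \<Rightarrow> 'b \<Rightarrow> 'a"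
    and \<beta> Bh :: real and z0 :: 'a and c0 :: "nat \<Rightarrow> 'a"
    and T :: nat and \<sigma> :: real and D :: "nat \<Rightarrow> 'b measure"
  assumes path: "fedcanon_path h \<rho> \<alpha> L \<phi>min fbar gradf N K gf \<beta> Bh c0"
    and B_pos: "B > 0"
    and D_prob: "\<And>i. i < N \<Longrightarrow> prob_space (D i)"
    and gF_measurable: "\<And>i. i < N \<Longrightarrow> (\<lambda>(x, \<xi>). gF i x \<xi>) \<in> borel_measurable (borel \<Otimes>\<^sub>M D i)"
    and gF_unbiased: "\<And>i x. i < N \<Longrightarrow> integrable (D i) (gF i x) \<and> (\<integral>\<xi>. gF i x \<xi> \<partial>D i) = gf i x"
    and gF_variance: "\<And>i x. i < N \<Longrightarrow> (\<integral>\<^sup>+\<xi>. ennreal ((norm (gF i x \<xi> - gf i x))\<^sup>2) \<partial>D i) \<le> ennreal (\<sigma>\<^sup>2)"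
begin

sublocale prox_setting h \<rho> \<alpha> L \<phi>min fbar gradf
  using path by (rule fedcanon_path.axioms(1))

lemma N_pos: "N > 0" and K_pos: "K > 0" and \<beta>_pos: "\<beta> > 0"
  using fedcanon_path.N_pos[OF path] fedcanon_path.K_pos[OF path] fedcanon_path.\<beta>_pos[OF path] .

definition sample_idx :: "(nat \<times> nat \<times> nat \<times> nat) set"
  where "sample_idx = {(t, i, k, b). t < T \<and> i < N \<and> k < K \<and> b < B}"

text \<open>Coordinates outside \<open>sample_idx\<close> get the (irrelevant) distribution \<open>D 0\<close>, so that every
  coordinate carries a probability measure.\<close>
definition sample_dist :: "nat \<times> nat \<times> nat \<times> nat \<Rightarrow> 'b measure"
  where "sample_dist j = D (case j of (t, i, k, b) \<Rightarrow> if i < N then i else 0)"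

definition sample_space :: "(nat \<times> nat \<times> nat \<times> nat \<Rightarrow> 'b) measure"
  where "sample_space = Pi\<^sub>M sample_idx sample_dist"

definition samples_of :: "(nat \<times> nat \<times> nat \<times> nat \<Rightarrow> 'b) \<Rightarrow> nat \<Rightarrow> nat \<Rightarrow> nat \<Rightarrow> nat \<Rightarrow> 'b"
  where "samples_of s t i k b = s (t, i, k, b)"

lemma finite_sample_idx: "finite sample_idx"
proof -
  have "sample_idx \<subseteq> {..<T} \<times> {..<N} \<times> {..<K} \<times> {..<B}" unfolding sample_idx_def by auto
  thus ?thesis by (rule finite_subset) auto
qed

lemma prob_space_sample_dist: "prob_space (sample_dist j)"
  unfolding sample_dist_def using D_prob N_pos by (auto split: prod.splits)

lemma product_prob_space_sample_dist: "product_prob_space sample_dist"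
  by (simp add: product_prob_space_def product_prob_space_axioms_def product_sigma_finite_def
      prob_space_sample_dist prob_space_imp_sigma_finite)

lemma prob_space_sample_space: "prob_space sample_space"
  unfolding sample_space_def by (intro prob_space_PiM prob_space_sample_dist)

lemma sample_dist_eq: "(t, i, k, b) \<in> sample_idx \<Longrightarrow> sample_dist (t, i, k, b) = D i"
  unfolding sample_dist_def sample_idx_def by simp

lemma measurable_sample: "(t, i, k, b) \<in> sample_idx \<Longrightarrow> (\<lambda>s. s (t, i, k, b)) \<in> sample_space \<rightarrow>\<^sub>M D i"
  using measurable_component_singleton[of "(t, i, k, b)" sample_idx sample_dist]
  unfolding sample_space_def by (simp add: sample_dist_eq)

lemma measurable_gF_sample:
  assumes "(t, i, k, b) \<in> sample_idx" "X \<in> borel_measurable sample_space"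
  shows "(\<lambda>s. gF i (X s) (s (t, i, k, b))) \<in> borel_measurable sample_space"
proof -
  have "i < N" using assms(1) unfolding sample_idx_def by simp
  have "(\<lambda>s. (X s, s (t, i, k, b))) \<in> sample_space \<rightarrow>\<^sub>M borel \<Otimes>\<^sub>M D i"
    using assms(2) measurable_sample[OF assms(1)] by (rule measurable_Pair)
  from measurable_compose[OF this gF_measurable[OF \<open>i < N\<close>]] show ?thesis by simp
qed

lemma gf_measurable: "i < N \<Longrightarrow> gf i \<in> borel_measurable borel"
proof -
  assume "i < N"
  hence "L-lipschitz_on UNIV (gf i)"
    using fedcanon_path.gf_lipschitz[OF path] L_nonneg by (simp add: lipschitz_on_def dist_norm)
  thus ?thesis by (intro borel_measurable_continuous_onI lipschitz_on_continuous_on)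
qed

lemma prox_measurable: "prox h \<alpha> \<in> borel_measurable borel"
proof -
  have "(1 / (1 - \<alpha> * \<rho>))-lipschitz_on UNIV (prox h \<alpha>)"
    unfolding lipschitz_on_def dist_norm using prox_lipschitz \<alpha>\<rho>_less_1
    by (simp add: divide_inverse mult.commute)
  thus ?thesis by (intro borel_measurable_continuous_onI lipschitz_on_continuous_on)
qed

lemma gradf_measurable: "gradf \<in> borel_measurable borel"
  unfolding fedcanon_path.gradf_def[OF path] using gf_measurable by measurable

lemma measurable_local_iter:
  assumes "t < T" "i < N" "Z \<in> borel_measurable sample_space" "C \<in> borel_measurable sample_space"
  shows "k \<le> K \<Longrightarrow> (\<lambda>s. local_iter (mb_grad gF B (samples_of s) t i) \<beta> (C s) (Z s) k) \<in> borel_measurable sample_space"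
proof (induction k)
  case (Suc k)
  define X where "X s = local_iter (mb_grad gF B (samples_of s) t i) \<beta> (C s) (Z s) k" for s
  have X: "X \<in> borel_measurable sample_space" unfolding X_def using Suc by simp
  have "(\<lambda>s. gF i (X s) (s (t, i, k, b))) \<in> borel_measurable sample_space" if "b < B" for b
    using assms(1,2) Suc.prems that by (intro measurable_gF_sample X) (simp add: sample_idx_def)
  hence "(\<lambda>s. mb_grad gF B (samples_of s) t i k (X s)) \<in> borel_measurable sample_space"
    unfolding mb_grad_def samples_of_def by measurable
  thus ?case using X assms(4) unfolding X_def by simp
qed (use assms(3) in simp)

lemma measurable_fedcanon:
  "t \<le> T \<Longrightarrow> (\<lambda>s. fst (fedcanon gF h N K B \<alpha> \<beta> z0 c0 (samples_of s) t)) \<in> borel_measurable sample_space \<and>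
     (\<forall>i<N. (\<lambda>s. snd (fedcanon gF h N K B \<alpha> \<beta> z0 c0 (samples_of s) t) i) \<in> borel_measurable sample_space)"
proof (induction t)
  case (Suc t)
  define Z where "Z s = fst (fedcanon gF h N K B \<alpha> \<beta> z0 c0 (samples_of s) t)" for s
  define C where "C s = snd (fedcanon gF h N K B \<alpha> \<beta> z0 c0 (samples_of s) t)" for s
  define \<Delta> where "\<Delta> s i = (1 / (\<beta> * real K)) *\<^sub>R (Z s - local_iter (mb_grad gF B (samples_of s) t i) \<beta> (C s i) (Z s) K)"
    for s i
  have Z: "Z \<in> borel_measurable sample_space" and C: "\<And>i. i < N \<Longrightarrow> (\<lambda>s. C s i) \<in> borel_measurable sample_space"
    using Suc unfolding Z_def C_def by auto
  have "t < T" using Suc.prems by simp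
  have \<Delta>: "(\<lambda>s. \<Delta> s i) \<in> borel_measurable sample_space" if "i < N" for i
    using measurable_local_iter[OF \<open>t < T\<close> that Z C[OF that] order_refl] Z unfolding \<Delta>_def by measurable
  hence \<Delta>_mean: "(\<lambda>s. (1 / real N) *\<^sub>R (\<Sum>i<N. \<Delta> s i)) \<in> borel_measurable sample_space"
    by measurable
  have "(\<lambda>s. prox h \<alpha> (Z s - \<alpha> *\<^sub>R ((1 / real N) *\<^sub>R (\<Sum>i<N. \<Delta> s i)))) \<in> borel_measurable sample_space"
    using measurable_compose[OF _ prox_measurable] Z \<Delta>_mean by measurable
  moreover have "(\<lambda>s. C s j + (1 / real N) *\<^sub>R (\<Sum>i<N. \<Delta> s i) - \<Delta> s j) \<in> borel_measurable sample_space"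
    if "j < N" for j
    using C[OF that] \<Delta>_mean \<Delta>[OF that] by measurable
  ultimately show ?case unfolding fedcanon.simps Let_def Z_def[symmetric] C_def[symmetric] \<Delta>_def[symmetric]
    by simp
qed simp

abbreviation z_at :: "(nat \<times> nat \<times> nat \<times> nat \<Rightarrow> 'b) \<Rightarrow> nat \<Rightarrow> 'a"
  where "z_at s \<equiv> fedcanon_path.z_iter h \<alpha> N K B gF \<beta> z0 c0 (samples_of s)"
abbreviation x_at :: "(nat \<times> nat \<times> nat \<times> nat \<Rightarrow> 'b) \<Rightarrow> nat \<Rightarrow> nat \<Rightarrow> nat \<Rightarrow> 'a"
  where "x_at s \<equiv> fedcanon_path.x_loc h \<alpha> N K B gF \<beta> z0 c0 (samples_of s)"
abbreviation e_sum_at :: "(nat \<times> nat \<times> nat \<times> nat \<Rightarrow> 'b) \<Rightarrow> nat \<Rightarrow> nat \<Rightarrow> nat \<Rightarrow> 'a"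
  where "e_sum_at s \<equiv> fedcanon_path.e_sum h \<alpha> N K B gf gF \<beta> z0 c0 (samples_of s)"
abbreviation noise_run_at :: "(nat \<times> nat \<times> nat \<times> nat \<Rightarrow> 'b) \<Rightarrow> nat \<Rightarrow> real"
  where "noise_run_at s \<equiv> fedcanon_path.noise_run h \<alpha> N K B gf gF \<beta> z0 c0 (samples_of s)"
abbreviation noise_end_at :: "(nat \<times> nat \<times> nat \<times> nat \<Rightarrow> 'b) \<Rightarrow> nat \<Rightarrow> real"
  where "noise_end_at s \<equiv> fedcanon_path.noise_end h \<alpha> N K B gf gF \<beta> z0 c0 (samples_of s)"
abbreviation pgrad_sq_at :: "(nat \<times> nat \<times> nat \<times> nat \<Rightarrow> 'b) \<Rightarrow> nat \<Rightarrow> real"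
  where "pgrad_sq_at s \<equiv> fedcanon_path.pgrad_sq h \<alpha> gradf N K B gF \<beta> z0 c0 (samples_of s)"

lemma x_at_eq: "x_at s t i k = local_iter (mb_grad gF B (samples_of s) t i) \<beta>
    (snd (fedcanon gF h N K B \<alpha> \<beta> z0 c0 (samples_of s) t) i) (fst (fedcanon gF h N K B \<alpha> \<beta> z0 c0 (samples_of s) t)) k"
  by (simp add: fedcanon_path.x_loc_def[OF path] fedcanon_path.z_iter_def[OF path] fedcanon_path.c_iter_def[OF path])

lemma measurable_x_at: "t < T \<Longrightarrow> i < N \<Longrightarrow> k \<le> K \<Longrightarrow> (\<lambda>s. x_at s t i k) \<in> borel_measurable sample_space"
  unfolding x_at_eq using measurable_fedcanon[of t] by (intro measurable_local_iter) auto

lemma measurable_z_at: "t \<le> T \<Longrightarrow> (\<lambda>s. z_at s t) \<in> borel_measurable sample_space"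
  using measurable_fedcanon[of t] by (simp add: fedcanon_path.z_iter_def[OF path])

lemma measurable_pgrad_sq_at: "t \<le> T \<Longrightarrow> (\<lambda>s. pgrad_sq_at s t) \<in> borel_measurable sample_space"
  using measurable_z_at[of t] measurable_compose[OF _ gradf_measurable] measurable_compose[OF _ prox_measurable]
  unfolding fedcanon_path.pgrad_sq_def[OF path] Gmap_def by measurable

lemma x_at_upd:
  assumes "i < N" "k \<le> k'"
  shows "x_at (s((t, i, k', b') := y)) t i k = x_at s t i k"
proof -
  let ?s' = "s((t, i, k', b') := y)"
  have samples_upd: "samples_of ?s' t'' i'' k'' b''
      = (if (t'', i'', k'', b'') = (t, i, k', b') then y else samples_of s t'' i'' k'' b'')" for t'' i'' k'' b''
    unfolding samples_of_def by auto
  have "fst (fedcanon gF h N K B \<alpha> \<beta> z0 c0 (samples_of ?s') t) = fst (fedcanon gF h N K B \<alpha> \<beta> z0 c0 (samples_of s) t) \<and>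
     (\<forall>i<N. snd (fedcanon gF h N K B \<alpha> \<beta> z0 c0 (samples_of ?s') t) i = snd (fedcanon gF h N K B \<alpha> \<beta> z0 c0 (samples_of s) t) i)"
    by (rule fedcanon_cong) (auto simp: samples_upd)
  moreover have "local_iter (mb_grad gF B (samples_of ?s') t i) \<beta> c z k = local_iter (mb_grad gF B (samples_of s) t i) \<beta> c z k"
    for c z
    using assms(2) by (intro local_iter_cong mb_grad_cong) (auto simp: samples_upd)
  ultimately show ?thesis unfolding x_at_eq using assms(1) by simp
qed

definition sample_err :: "nat \<Rightarrow> nat \<Rightarrow> (nat \<times> nat \<times> nat \<times> nat \<Rightarrow> 'b) \<Rightarrow> nat \<Rightarrow> nat \<Rightarrow> 'a"
  where "sample_err t i s k b = gF i (x_at s t i k) (s (t, i, k, b)) - gf i (x_at s t i k)"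

text \<open>The first \<open>n\<close> sampling errors of client \<open>i\<close> in round \<open>t\<close>, in the order in which the samples
  are drawn: sample \<open>p\<close> is the \<open>p mod B\<close>-th element of the batch of local step \<open>p div B\<close>.\<close>
definition err_partial :: "nat \<Rightarrow> nat \<Rightarrow> nat \<Rightarrow> (nat \<times> nat \<times> nat \<times> nat \<Rightarrow> 'b) \<Rightarrow> 'a"
  where "err_partial t i n s = (\<Sum>p<n. sample_err t i s (p div B) (p mod B))"

lemma err_partial_upd:
  assumes "i < N"
  shows "err_partial t i n (s((t, i, n div B, n mod B) := y)) = err_partial t i n s"
  unfolding err_partial_def
proof (rule sum.cong)
  fix p assume "p \<in> {..<n}"
  hence le: "p div B \<le> n div B" and ne: "(p div B, p mod B) \<noteq> (n div B, n mod B)"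
    by (auto simp: div_le_mono) (metis div_mult_mod_eq less_irrefl)
  show "sample_err t i (s((t, i, n div B, n mod B) := y)) (p div B) (p mod B) = sample_err t i s (p div B) (p mod B)"
    unfolding sample_err_def using x_at_upd[OF assms le] ne by auto
qed simp

lemma measurable_err_partial:
  assumes "t < T" "i < N" "n \<le> K * B"
  shows "err_partial t i n \<in> borel_measurable sample_space"
proof -
  have "(\<lambda>s. sample_err t i s (p div B) (p mod B)) \<in> borel_measurable sample_space" if "p < n" for p
  proof -
    have p: "p div B < K" "p mod B < B"
      using that assms(3) B_pos by (auto simp: div_less_iff_less_mult)
    hence x: "(\<lambda>s. x_at s t i (p div B)) \<in> borel_measurable sample_space"
      using assms(1,2) by (intro measurable_x_at) auto
    have "(\<lambda>s. gF i (x_at s t i (p div B)) (s (t, i, p div B, p mod B))) \<in> borel_measurable sample_space"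
      using assms(1,2) p by (intro measurable_gF_sample x) (simp add: sample_idx_def)
    moreover have "(\<lambda>s. gf i (x_at s t i (p div B))) \<in> borel_measurable sample_space"
      using measurable_compose[OF x gf_measurable[OF assms(2)]] .
    ultimately show ?thesis unfolding sample_err_def by measurable
  qed
  thus ?thesis unfolding err_partial_def[abs_def] by measurable
qed

text \<open>Each sample adds a centred error, independent of everything drawn before,
  so the second moments of the sampling errors add up.\<close>
lemma err_partial_sq_bound:
  assumes "t < T" "i < N"
  shows "n \<le> K * B \<Longrightarrow> integrable sample_space (\<lambda>s. (norm (err_partial t i n s))\<^sup>2)
           \<and> (\<integral>s. (norm (err_partial t i n s))\<^sup>2 \<partial>sample_space) \<le> real n * \<sigma>\<^sup>2"
proof (induction n)
  case 0
  interpret prob_space sample_space by (rule prob_space_sample_space)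
  show ?case by (simp add: err_partial_def)
next
  case (Suc n)
  define q where "q = (t, i, n div B, n mod B)"
  have "n div B < K" "n mod B < B" using Suc.prems B_pos by (auto simp: div_less_iff_less_mult)
  hence q: "q \<in> sample_idx" "sample_dist q = D i"
    unfolding q_def using assms by (auto simp: sample_idx_def sample_dist_def)
  interpret fresh_coordinate sample_dist sample_idx q "gF i" "gf i" "\<sigma>\<^sup>2" "\<lambda>s. x_at s t i (n div B)"
  proof (intro fresh_coordinate.intro product_prob_space_sample_dist fresh_coordinate_axioms.intro)
    show "(\<lambda>s. x_at s t i (n div B)) \<in> borel_measurable (Pi\<^sub>M sample_idx sample_dist)"
      using measurable_x_at[OF assms] \<open>n div B < K\<close> unfolding sample_space_def by simp
    show "x_at (s(q := y)) t i (n div B) = x_at s t i (n div B)" for s y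
      unfolding q_def using x_at_upd[OF assms(2)] by simp
  qed (use q finite_sample_idx gF_measurable[OF assms(2)] gF_unbiased[OF assms(2)] gF_variance[OF assms(2)]
         gf_measurable[OF assms(2)] in auto)
  have IH: "integrable sample_space (\<lambda>s. (norm (err_partial t i n s))\<^sup>2)"
      "(\<integral>s. (norm (err_partial t i n s))\<^sup>2 \<partial>sample_space) \<le> real n * \<sigma>\<^sup>2"
    using Suc by auto
  have "err_partial t i (Suc n) s = err_partial t i n s + noise s" for s
    unfolding err_partial_def sample_err_def by (simp add: noise_def[unfolded q_def] q_def)
  moreover have "err_partial t i n (s(q := y)) = err_partial t i n s" for s y
    unfolding q_def by (rule err_partial_upd[OF assms(2)])
  ultimately show ?case
    using sq_norm_add_noise[of "err_partial t i n"] IH measurable_err_partial[OF assms] Suc.prems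
    unfolding sample_space_def by (simp add: algebra_simps)
qed

lemma e_sum_at_eq: "e_sum_at s t i k = (1 / real B) *\<^sub>R err_partial t i (k * B) s"
proof -
  have "fedcanon_path.e_loc h \<alpha> N K B gf gF \<beta> z0 c0 (samples_of s) t i j
          = (1 / real B) *\<^sub>R (\<Sum>b<B. sample_err t i s j b)" for j
    using B_pos unfolding sample_err_def
    by (simp add: fedcanon_path.e_loc_def[OF path] fedcanon_path.g_loc_def[OF path] mb_grad_def
        samples_of_def sum_subtractf scaleR_diff_right sum_constant_scaleR)
  hence "e_sum_at s t i k = (1 / real B) *\<^sub>R (\<Sum>j<k. \<Sum>b<B. sample_err t i s j b)"
    by (simp add: fedcanon_path.e_sum_def[OF path] scaleR_sum_right)
  thus ?thesis unfolding err_partial_def sum_lessThan_mult_div_mod[OF B_pos] .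
qed

lemma e_sum_at_sq_bound:
  assumes "t < T" "i < N" "k \<le> K"
  shows "integrable sample_space (\<lambda>s. (norm (e_sum_at s t i k))\<^sup>2)"
    and "(\<integral>s. (norm (e_sum_at s t i k))\<^sup>2 \<partial>sample_space) \<le> real K * \<sigma>\<^sup>2 / real B"
proof -
  have sq: "(norm (e_sum_at s t i k))\<^sup>2 = (norm (err_partial t i (k * B) s))\<^sup>2 / (real B)\<^sup>2" for s
    unfolding e_sum_at_eq by (simp add: power_divide)
  note err = err_partial_sq_bound[OF assms(1,2), of "k * B"]
  show "integrable sample_space (\<lambda>s. (norm (e_sum_at s t i k))\<^sup>2)" unfolding sq using err assms(3) by simp
  have "(\<integral>s. (norm (e_sum_at s t i k))\<^sup>2 \<partial>sample_space) \<le> real (k * B) * \<sigma>\<^sup>2 / (real B)\<^sup>2"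
    unfolding sq using err assms(3) by (simp add: divide_right_mono)
  also have "\<dots> \<le> real K * \<sigma>\<^sup>2 / real B"
    using B_pos assms(3) by (simp add: power2_eq_square divide_right_mono mult_right_mono)
  finally show "(\<integral>s. (norm (e_sum_at s t i k))\<^sup>2 \<partial>sample_space) \<le> real K * \<sigma>\<^sup>2 / real B" .
qed

lemma noise_run_bound:
  assumes "t < T"
  shows "integrable sample_space (\<lambda>s. noise_run_at s t)"
    and "(\<integral>s. noise_run_at s t \<partial>sample_space) \<le> \<sigma>\<^sup>2 / real B"
proof -
  have eq: "noise_run_at s t = (1 / real N) * (\<Sum>i<N. (\<Sum>k<K. (norm (e_sum_at s t i k))\<^sup>2) / (real K)\<^sup>2)" for s
    by (simp add: fedcanon_path.noise_run_def[OF path] fedcanon_path.e_sum_sq_def[OF path])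
  have int: "integrable sample_space (\<lambda>s. (norm (e_sum_at s t i k))\<^sup>2)" if "i < N" "k < K" for i k
    using e_sum_at_sq_bound(1)[OF assms that(1)] that(2) by simp
  show "integrable sample_space (\<lambda>s. noise_run_at s t)" unfolding eq using int
    by (intro Bochner_Integration.integrable_mult_right Bochner_Integration.integrable_sum
        Bochner_Integration.integrable_divide) auto
  have int_i: "integrable sample_space (\<lambda>s. (\<Sum>k<K. (norm (e_sum_at s t i k))\<^sup>2) / (real K)\<^sup>2)" if "i < N" for i
    using int that by (intro Bochner_Integration.integrable_sum Bochner_Integration.integrable_divide) auto
  have "(\<integral>s. noise_run_at s t \<partial>sample_space)
          = (1 / real N) * (\<Sum>i<N. (\<integral>s. (\<Sum>k<K. (norm (e_sum_at s t i k))\<^sup>2) / (real K)\<^sup>2 \<partial>sample_space))"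
    unfolding eq using int_i by (simp add: Bochner_Integration.integral_sum)
  also have "\<dots> = (1 / real N) * (\<Sum>i<N. (\<Sum>k<K. (\<integral>s. (norm (e_sum_at s t i k))\<^sup>2 \<partial>sample_space)) / (real K)\<^sup>2)"
    using int by (intro arg_cong[where f = "(*) _"] sum.cong refl) (simp add: Bochner_Integration.integral_sum)
  also have "\<dots> \<le> (1 / real N) * (\<Sum>i<N. (\<Sum>k<K. real K * \<sigma>\<^sup>2 / real B) / (real K)\<^sup>2)"
    using e_sum_at_sq_bound(2)[OF assms] by (intro mult_left_mono sum_mono divide_right_mono) auto
  also have "\<dots> = \<sigma>\<^sup>2 / real B" using N_pos K_pos by (simp add: power2_eq_square)
  finally show "(\<integral>s. noise_run_at s t \<partial>sample_space) \<le> \<sigma>\<^sup>2 / real B" .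
qed

lemma noise_end_bound:
  assumes "t < T"
  shows "integrable sample_space (\<lambda>s. noise_end_at s t)"
    and "(\<integral>s. noise_end_at s t \<partial>sample_space) \<le> \<sigma>\<^sup>2 / (real B * real K)"
proof -
  have eq: "noise_end_at s t = (1 / real N) * (\<Sum>i<N. (norm (e_sum_at s t i K))\<^sup>2 / (real K)\<^sup>2)" for s
    by (simp add: fedcanon_path.noise_end_def[OF path])
  have int: "integrable sample_space (\<lambda>s. (norm (e_sum_at s t i K))\<^sup>2)" if "i < N" for i
    using e_sum_at_sq_bound(1)[OF assms that] by simp
  show "integrable sample_space (\<lambda>s. noise_end_at s t)" unfolding eq using int
    by (intro Bochner_Integration.integrable_mult_right Bochner_Integration.integrable_sum
        Bochner_Integration.integrable_divide) auto
  have "(\<integral>s. noise_end_at s t \<partial>sample_space)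
          = (1 / real N) * (\<Sum>i<N. (\<integral>s. (norm (e_sum_at s t i K))\<^sup>2 \<partial>sample_space) / (real K)\<^sup>2)"
    unfolding eq using int by (simp add: Bochner_Integration.integral_sum)
  also have "\<dots> \<le> (1 / real N) * (\<Sum>i<N. (real K * \<sigma>\<^sup>2 / real B) / (real K)\<^sup>2)"
    using e_sum_at_sq_bound(2)[OF assms] by (intro mult_left_mono sum_mono divide_right_mono) auto
  also have "\<dots> = \<sigma>\<^sup>2 / (real B * real K)" using N_pos K_pos by (simp add: power2_eq_square)
  finally show "(\<integral>s. noise_end_at s t \<partial>sample_space) \<le> \<sigma>\<^sup>2 / (real B * real K)" .
qed

lemma pathwise_bound:
  assumes "h z0 \<noteq> \<infinity>"
  shows "(\<Sum>t<T. pgrad_sq_at s t)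
           \<le> 8 * ((fbar z0 + real_of_ereal (h z0) - \<phi>min) / \<alpha>)
             + 8 * ((1 / real N) * (\<Sum>i<N. (norm (gf i z0 + c0 i - gradf z0))\<^sup>2)) + real T * Bh
             + (\<Sum>t<T. noise_run_at s t) / 8 + 50 * (\<Sum>t<T. noise_end_at s t)"
proof -
  interpret P: fedcanon_path h \<rho> \<alpha> L \<phi>min fbar gradf N K B gf gF \<beta> Bh z0 c0 "samples_of s"
    by (rule path)
  have "P.phi_val 0 = fbar z0 + real_of_ereal (h z0)" by (simp add: P.phi_val_def P.h_val_def P.z_iter_0)
  moreover have "P.cv_sq 0 = (1 / real N) * (\<Sum>i<N. (norm (gf i z0 + c0 i - gradf z0))\<^sup>2)"
    by (simp add: P.cv_sq_def P.cv_err_def P.z_iter_0 P.c_iter_0)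
  ultimately show ?thesis using P.path_bound[OF assms, of T] by simp
qed

lemma noise_sums:
  shows integrable_noise_sums:
      "integrable sample_space (\<lambda>s. C + (\<Sum>t<T. noise_run_at s t) / 8 + 50 * (\<Sum>t<T. noise_end_at s t))"
    and integral_noise_sums_le:
      "(\<integral>s. C + (\<Sum>t<T. noise_run_at s t) / 8 + 50 * (\<Sum>t<T. noise_end_at s t) \<partial>sample_space)
         \<le> C + real T * (\<sigma>\<^sup>2 / real B) / 8 + 50 * (real T * (\<sigma>\<^sup>2 / (real B * real K)))"
proof -
  interpret prob_space sample_space by (rule prob_space_sample_space)
  have integrable_run: "integrable sample_space (\<lambda>s. (\<Sum>t<T. noise_run_at s t) / 8)"
    and integrable_end: "integrable sample_space (\<lambda>s. 50 * (\<Sum>t<T. noise_end_at s t))"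
    using noise_run_bound(1) noise_end_bound(1)
    by (intro Bochner_Integration.integrable_divide Bochner_Integration.integrable_mult_right
        Bochner_Integration.integrable_sum; simp)+
  thus "integrable sample_space (\<lambda>s. C + (\<Sum>t<T. noise_run_at s t) / 8 + 50 * (\<Sum>t<T. noise_end_at s t))"
    by simp
  have "(\<integral>s. C + (\<Sum>t<T. noise_run_at s t) / 8 + 50 * (\<Sum>t<T. noise_end_at s t) \<partial>sample_space)
          = C + (\<Sum>t<T. \<integral>s. noise_run_at s t \<partial>sample_space) / 8 + 50 * (\<Sum>t<T. \<integral>s. noise_end_at s t \<partial>sample_space)"
    using integrable_run integrable_end noise_run_bound(1) noise_end_bound(1) prob_space
    by (simp add: Bochner_Integration.integral_add Bochner_Integration.integral_sum)
  moreover have "(\<Sum>t<T. \<integral>s. noise_run_at s t \<partial>sample_space) \<le> (\<Sum>t<T. \<sigma>\<^sup>2 / real B)"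
    by (rule sum_mono) (simp add: noise_run_bound(2))
  moreover have "(\<Sum>t<T. \<integral>s. noise_end_at s t \<partial>sample_space) \<le> (\<Sum>t<T. \<sigma>\<^sup>2 / (real B * real K))"
    by (rule sum_mono) (simp add: noise_end_bound(2))
  ultimately show "(\<integral>s. C + (\<Sum>t<T. noise_run_at s t) / 8 + 50 * (\<Sum>t<T. noise_end_at s t) \<partial>sample_space)
      \<le> C + real T * (\<sigma>\<^sup>2 / real B) / 8 + 50 * (real T * (\<sigma>\<^sup>2 / (real B * real K)))"
    unfolding sum_constant card_lessThan by (simp only:) (intro add_mono divide_right_mono mult_left_mono; simp)
qed

lemma expected_path_bound:
  assumes "h z0 \<noteq> \<infinity>"
  defines "C \<equiv> 8 * ((fbar z0 + real_of_ereal (h z0) - \<phi>min) / \<alpha>)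
                + 8 * ((1 / real N) * (\<Sum>i<N. (norm (gf i z0 + c0 i - gradf z0))\<^sup>2)) + real T * Bh"
  shows "(\<Sum>t<T. \<integral>\<^sup>+s. ennreal (pgrad_sq_at s t) \<partial>sample_space)
           \<le> ennreal (C + real T * (\<sigma>\<^sup>2 / real B) / 8 + 50 * (real T * (\<sigma>\<^sup>2 / (real B * real K))))"
proof -
  define bound where "bound s = C + (\<Sum>t<T. noise_run_at s t) / 8 + 50 * (\<Sum>t<T. noise_end_at s t)" for s
  have pgrad_nonneg: "pgrad_sq_at s t \<ge> 0" for s t by (simp add: fedcanon_path.pgrad_sq_def[OF path])
  have pathwise: "(\<Sum>t<T. pgrad_sq_at s t) \<le> bound s" for s
    using pathwise_bound[OF assms(1)] unfolding bound_def C_def by simp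
  have "(\<Sum>t<T. \<integral>\<^sup>+s. ennreal (pgrad_sq_at s t) \<partial>sample_space)
          = (\<integral>\<^sup>+s. (\<Sum>t<T. ennreal (pgrad_sq_at s t)) \<partial>sample_space)"
    using measurable_pgrad_sq_at by (intro nn_integral_sum[symmetric]) auto
  also have "\<dots> = (\<integral>\<^sup>+s. ennreal (\<Sum>t<T. pgrad_sq_at s t) \<partial>sample_space)"
    using pgrad_nonneg by (simp add: sum_ennreal)
  also have "\<dots> \<le> (\<integral>\<^sup>+s. ennreal (bound s) \<partial>sample_space)"
    using pathwise by (intro nn_integral_mono ennreal_leI)
  also have "\<dots> = ennreal (\<integral>s. bound s \<partial>sample_space)"
  proof (intro nn_integral_eq_integral AE_I2)
    show "integrable sample_space bound" unfolding bound_def by (rule integrable_noise_sums)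
    show "0 \<le> bound s" for s using pathwise[of s] sum_nonneg[of "{..<T}" "pgrad_sq_at s"] pgrad_nonneg by simp
  qed
  also have "\<dots> \<le> ennreal (C + real T * (\<sigma>\<^sup>2 / real B) / 8 + 50 * (real T * (\<sigma>\<^sup>2 / (real B * real K))))"
    unfolding bound_def by (intro ennreal_leI integral_noise_sums_le)
  finally show ?thesis .
qed

end

section \<open>Expected stationarity\<close>

lemma ereal_mean_le_of_sum_le:
  assumes "(\<Sum>t<T. G t) \<le> ennreal C" "C \<ge> 0"
  shows "ereal (1 / real T) * (\<Sum>t<T. enn2ereal (G t)) \<le> ereal (C / real T)"
proof -
  have "(\<Sum>t<T. enn2ereal (G t)) = enn2ereal (\<Sum>t<T. G t)" by (rule sum_enn2ereal) simp
  also have "\<dots> \<le> ereal C"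
    using assms by (metis enn2ereal_ennreal less_eq_ennreal.rep_eq)
  finally have "ereal (1 / real T) * (\<Sum>t<T. enn2ereal (G t)) \<le> ereal (1 / real T) * ereal C"
    by (intro ereal_mult_left_mono) auto
  thus ?thesis by simp
qed

locale fedcanon_stochastic =
  fedcanon_sampling h \<rho> \<alpha> L \<phi>min fbar gradf N K B gf gF \<beta> Bh z0 c0 T \<sigma> D
  for h :: "'a::euclidean_space \<Rightarrow> ereal" and \<rho> \<alpha> L \<phi>min fbar gradf N K B gf
    and gF :: "nat \<Rightarrow> 'a \<Rightarrow> 'b \<Rightarrow> 'a" and \<beta> Bh z0 c0 T \<sigma> D +
  fixes M :: "'m measure" and \<xi> :: "nat \<Rightarrow> nat \<Rightarrow> nat \<Rightarrow> nat \<Rightarrow> 'm \<Rightarrow> 'b"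
  assumes T_pos: "T \<ge> 1" and M_prob: "prob_space M"
    and \<xi>_measurable: "\<And>t i k b. i < N \<Longrightarrow> \<xi> t i k b \<in> M \<rightarrow>\<^sub>M D i"
    and \<xi>_distr: "\<And>t i k b. i < N \<Longrightarrow> distr M (D i) (\<xi> t i k b) = D i"
    and \<xi>_indep: "prob_space.indep_vars M (\<lambda>(t, i, k, b). D i) (\<lambda>(t, i, k, b). \<xi> t i k b)
                    {(t, i, k, b). i < N \<and> k < K \<and> b < B}"
begin

definition sample_vector :: "'m \<Rightarrow> nat \<times> nat \<times> nat \<times> nat \<Rightarrow> 'b"
  where "sample_vector \<omega> = (\<lambda>j\<in>sample_idx. case j of (t, i, k, b) \<Rightarrow> \<xi> t i k b \<omega>)"

lemma measurable_sample_vector: "sample_vector \<in> M \<rightarrow>\<^sub>M sample_space"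
  unfolding sample_vector_def sample_space_def
proof (rule measurable_restrict)
  fix j assume "j \<in> sample_idx"
  then obtain t i k b where j: "j = (t, i, k, b)" "i < N" unfolding sample_idx_def by auto
  show "(\<lambda>\<omega>. case j of (t, i, k, b) \<Rightarrow> \<xi> t i k b \<omega>) \<in> M \<rightarrow>\<^sub>M sample_dist j"
    using \<xi>_measurable[OF j(2)] \<open>j \<in> sample_idx\<close> unfolding j by (simp add: sample_dist_eq)
qed

lemma distr_sample_vector: "distr M sample_space sample_vector = sample_space"
proof -
  interpret M: prob_space M by (rule M_prob)
  have "(0, 0, 0, 0) \<in> sample_idx" using T_pos N_pos K_pos B_pos unfolding sample_idx_def by simp
  hence nonempty: "sample_idx \<noteq> {}" by auto
  have indep: "M.indep_vars (\<lambda>(t, i, k, b). D i) (\<lambda>(t, i, k, b). \<xi> t i k b) sample_idx"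
    by (rule M.indep_vars_subset[OF \<xi>_indep]) (auto simp: sample_idx_def)
  have rv: "M.random_variable ((\<lambda>(t, i, k, b). D i) j) ((\<lambda>(t, i, k, b). \<xi> t i k b) j)"
    if "j \<in> sample_idx" for j
    using that \<xi>_measurable unfolding sample_idx_def by auto
  have "distr M (Pi\<^sub>M sample_idx (\<lambda>(t, i, k, b). D i)) (\<lambda>\<omega>. \<lambda>j\<in>sample_idx. (\<lambda>(t, i, k, b). \<xi> t i k b) j \<omega>)
      = Pi\<^sub>M sample_idx (\<lambda>j. distr M ((\<lambda>(t, i, k, b). D i) j) ((\<lambda>(t, i, k, b). \<xi> t i k b) j))"
    using M.indep_vars_iff_distr_eq_PiM'[OF nonempty rv] indep by simp
  moreover have "Pi\<^sub>M sample_idx (\<lambda>(t, i, k, b). D i) = sample_space"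
    unfolding sample_space_def by (rule PiM_cong) (auto simp: sample_dist_eq)
  moreover have "Pi\<^sub>M sample_idx (\<lambda>j. distr M ((\<lambda>(t, i, k, b). D i) j) ((\<lambda>(t, i, k, b). \<xi> t i k b) j)) = sample_space"
    unfolding sample_space_def by (rule PiM_cong) (auto simp: sample_dist_eq sample_idx_def \<xi>_distr)
  ultimately show ?thesis unfolding sample_vector_def by (simp add: case_prod_unfold)
qed

lemma fedcanon_sample_vector:
  assumes "t \<le> T"
  shows "fst (fedcanon gF h N K B \<alpha> \<beta> z0 c0 (\<lambda>t i k b. \<xi> t i k b \<omega>) t) = z_at (sample_vector \<omega>) t"
proof -
  have "fst (fedcanon gF h N K B \<alpha> \<beta> z0 c0 (\<lambda>t i k b. \<xi> t i k b \<omega>) t)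
          = fst (fedcanon gF h N K B \<alpha> \<beta> z0 c0 (samples_of (sample_vector \<omega>)) t) \<and>
        (\<forall>i<N. snd (fedcanon gF h N K B \<alpha> \<beta> z0 c0 (\<lambda>t i k b. \<xi> t i k b \<omega>) t) i
          = snd (fedcanon gF h N K B \<alpha> \<beta> z0 c0 (samples_of (sample_vector \<omega>)) t) i)"
    by (rule fedcanon_cong) (use assms in \<open>auto simp: samples_of_def sample_vector_def sample_idx_def\<close>)
  thus ?thesis by (simp add: fedcanon_path.z_iter_def[OF path])
qed

lemma expected_pgrad_sq_eq:
  assumes "t \<le> T"
  shows "(\<integral>\<^sup>+\<omega>. ennreal ((norm (Gmap h \<alpha> (fst (fedcanon gF h N K B \<alpha> \<beta> z0 c0 (\<lambda>t i k b. \<xi> t i k b \<omega>) t))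
            (gradf (fst (fedcanon gF h N K B \<alpha> \<beta> z0 c0 (\<lambda>t i k b. \<xi> t i k b \<omega>) t)))))\<^sup>2) \<partial>M)
         = (\<integral>\<^sup>+s. ennreal (pgrad_sq_at s t) \<partial>sample_space)"
proof -
  have "(\<integral>\<^sup>+s. ennreal (pgrad_sq_at s t) \<partial>sample_space) = (\<integral>\<^sup>+\<omega>. ennreal (pgrad_sq_at (sample_vector \<omega>) t) \<partial>M)"
    using measurable_pgrad_sq_at[OF assms]
    by (subst distr_sample_vector[symmetric]) (simp add: nn_integral_distr[OF measurable_sample_vector])
  thus ?thesis
    using assms by (simp add: fedcanon_sample_vector fedcanon_path.pgrad_sq_def[OF path])
qed

lemma expected_pgrad_sq_sum_le:
  assumes "h z0 \<noteq> \<infinity>"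
  defines "z \<equiv> \<lambda>t \<omega>. fst (fedcanon gF h N K B \<alpha> \<beta> z0 c0 (\<lambda>t i k b. \<xi> t i k b \<omega>) t)"
  shows "(\<Sum>t<T. \<integral>\<^sup>+\<omega>. ennreal ((norm (Gmap h \<alpha> (z t \<omega>) (gradf (z t \<omega>))))\<^sup>2) \<partial>M)
           \<le> ennreal (8 * ((fbar z0 + real_of_ereal (h z0) - \<phi>min) / \<alpha>)
                + 8 * ((1 / real N) * (\<Sum>i<N. (norm (gf i z0 + c0 i - gradf z0))\<^sup>2)) + real T * Bh
                + real T * (\<sigma>\<^sup>2 / real B) / 8 + 50 * (real T * (\<sigma>\<^sup>2 / (real B * real K))))"
  using expected_path_bound[OF assms(1)] expected_pgrad_sq_eq unfolding z_def by simp

theorem mean_expected_pgrad_sq_le: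
  defines "E0 \<equiv> (1 / real N) * (\<Sum>i<N. (norm (gf i z0 + c0 i - gradf z0))\<^sup>2)"
    and "z \<equiv> \<lambda>t \<omega>. fst (fedcanon gF h N K B \<alpha> \<beta> z0 c0 (\<lambda>t i k b. \<xi> t i k b \<omega>) t)"
  shows "ereal (1 / real T) * (\<Sum>t<T. enn2ereal (\<integral>\<^sup>+\<omega>. ennreal ((norm (Gmap h \<alpha> (z t \<omega>) (gradf (z t \<omega>))))\<^sup>2) \<partial>M))
           \<le> ereal (8 / (\<alpha> * real T)) * (ereal (fbar z0) + h z0 - ereal \<phi>min + ereal (\<alpha> * E0))
             + ereal (50 * \<sigma>\<^sup>2 / (real B * real K) + \<sigma>\<^sup>2 / (8 * real B) + Bh)"
proof (cases "h z0 = \<infinity>")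
  case True
  hence infinite: "ereal (8 / (\<alpha> * real T)) * (ereal (fbar z0) + h z0 - ereal \<phi>min + ereal (\<alpha> * E0)) = \<infinity>"
    using \<alpha>_pos T_pos by simp
  show ?thesis by (subst infinite) simp
next
  case False
  then obtain hz where hz: "h z0 = ereal hz" using h_neq_minf[of z0] by (cases "h z0") auto
  define C where "C = 8 * ((fbar z0 + hz - \<phi>min) / \<alpha>) + 8 * E0 + real T * Bh
                      + real T * (\<sigma>\<^sup>2 / real B) / 8 + 50 * (real T * (\<sigma>\<^sup>2 / (real B * real K)))"
  have "(\<Sum>t<T. \<integral>\<^sup>+\<omega>. ennreal ((norm (Gmap h \<alpha> (z t \<omega>) (gradf (z t \<omega>))))\<^sup>2) \<partial>M) \<le> ennreal C"
    using expected_pgrad_sq_sum_le[OF False] unfolding C_def E0_def z_def hz by simp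
  moreover have "C \<ge> 0"
    using h_ge[of z0] fedcanon_path.Bh_nonneg[OF path] \<alpha>_pos unfolding C_def E0_def hz
    by (simp add: sum_nonneg)
  ultimately have "ereal (1 / real T) * (\<Sum>t<T. enn2ereal (\<integral>\<^sup>+\<omega>. ennreal ((norm (Gmap h \<alpha> (z t \<omega>) (gradf (z t \<omega>))))\<^sup>2) \<partial>M))
                     \<le> ereal (C / real T)"
    by (rule ereal_mean_le_of_sum_le)
  also have "C / real T = 8 / (\<alpha> * real T) * (fbar z0 + hz - \<phi>min + \<alpha> * E0)
                          + (50 * \<sigma>\<^sup>2 / (real B * real K) + \<sigma>\<^sup>2 / (8 * real B) + Bh)"
    using T_pos \<alpha>_pos B_pos K_pos unfolding C_def by (simp add: field_simps)
  finally show ?thesis unfolding hz by simp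
qed

end

lemma mean_descent_inequality:
  fixes f :: "nat \<Rightarrow> 'a::real_inner \<Rightarrow> real"
  assumes "N > 0" "\<And>i x y. i < N \<Longrightarrow> f i x - f i y - inner (gf i y) (x - y) \<le> L / 2 * (norm (x - y))\<^sup>2"
  shows "(1 / real N) * (\<Sum>i<N. f i x)
           \<le> (1 / real N) * (\<Sum>i<N. f i y) + inner ((1 / real N) *\<^sub>R (\<Sum>i<N. gf i y)) (x - y) + L / 2 * (norm (x - y))\<^sup>2"
proof -
  have "(\<Sum>i<N. f i x - f i y - inner (gf i y) (x - y)) \<le> (\<Sum>i<N. L / 2 * (norm (x - y))\<^sup>2)"
    using assms(2) by (intro sum_mono) auto
  hence "(\<Sum>i<N. f i x) - (\<Sum>i<N. f i y) - inner (\<Sum>i<N. gf i y) (x - y) \<le> real N * (L / 2 * (norm (x - y))\<^sup>2)"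
    by (simp add: sum_subtractf inner_sum_left)
  hence "(1 / real N) * ((\<Sum>i<N. f i x) - (\<Sum>i<N. f i y) - inner (\<Sum>i<N. gf i y) (x - y))
           \<le> (1 / real N) * (real N * (L / 2 * (norm (x - y))\<^sup>2))"
    by (intro mult_left_mono) auto
  thus ?thesis using assms(1) by (simp add: algebra_simps inner_sum_left)
qed

lemma INF_add_finite:
  fixes g :: "'a \<Rightarrow> real" and h :: "'a \<Rightarrow> ereal"
  assumes "proper_fun h" "(INF x. ereal (g x) + h x) > -\<infinity>"
  obtains m where "(INF x. ereal (g x) + h x) = ereal m" "\<And>x. ereal (m - g x) \<le> h x"
proof -
  obtain x0 where "h x0 \<noteq> \<infinity>" "h x0 \<noteq> -\<infinity>" using assms(1) unfolding proper_fun_def by auto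
  hence "(INF x. ereal (g x) + h x) < \<infinity>"
    by (intro le_less_trans[OF INF_lower[of x0]]) auto
  then obtain m where m: "(INF x. ereal (g x) + h x) = ereal m" using assms(2) by (cases "INF x. ereal (g x) + h x") auto
  have "ereal (m - g x) \<le> h x" for x
  proof -
    have "ereal m \<le> ereal (g x) + h x" unfolding m[symmetric] by (rule INF_lower) simp
    thus ?thesis using assms(1) unfolding proper_fun_def by (cases "h x") auto
  qed
  with m that show ?thesis by blast
qed

lemma step_size_consequences:
  fixes \<alpha> \<beta> \<rho> L :: real
  assumes "\<alpha> > 0" "L > 0" "\<rho> \<ge> 0" "\<alpha> * (\<rho> + L) + 4 * \<alpha>\<^sup>2 * L\<^sup>2 \<le> 1 / 2"
    and "192 * (6 + 1 / (1 - \<alpha> * \<rho>)\<^sup>2) * \<beta>\<^sup>2 * (real K)\<^sup>2 * L\<^sup>2 \<le> 1"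
  shows "\<alpha> * \<rho> < 1" "\<alpha> * L < 1" "1344 * \<beta>\<^sup>2 * (real K)\<^sup>2 * L\<^sup>2 \<le> 1"
proof -
  have "0 \<le> \<alpha> * \<rho>" "0 < \<alpha> * L" "0 \<le> 4 * \<alpha>\<^sup>2 * L\<^sup>2" using assms(1-3) by simp_all
  moreover have "\<alpha> * (\<rho> + L) = \<alpha> * \<rho> + \<alpha> * L" by (simp add: algebra_simps)
  ultimately show \<alpha>\<rho>: "\<alpha> * \<rho> < 1" and "\<alpha> * L < 1" using assms(4) by linarith+
  have "(1 - \<alpha> * \<rho>)\<^sup>2 \<le> 1" "(1 - \<alpha> * \<rho>)\<^sup>2 > 0"
    using \<alpha>\<rho> \<open>0 \<le> \<alpha> * \<rho>\<close> by (auto simp: power_le_one)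
  hence "1 \<le> 1 / (1 - \<alpha> * \<rho>)\<^sup>2" by simp
  hence "1344 * (\<beta>\<^sup>2 * (real K)\<^sup>2 * L\<^sup>2) \<le> 192 * (6 + 1 / (1 - \<alpha> * \<rho>)\<^sup>2) * (\<beta>\<^sup>2 * (real K)\<^sup>2 * L\<^sup>2)"
    by (intro mult_right_mono) auto
  thus "1344 * \<beta>\<^sup>2 * (real K)\<^sup>2 * L\<^sup>2 \<le> 1" using assms(5) by (simp add: mult.assoc)
qed

theorem theorem1:
  fixes N K B T :: nat
    and F :: "nat \<Rightarrow> 'a::euclidean_space \<Rightarrow> 'b \<Rightarrow> real"
    and gF :: "nat \<Rightarrow> 'a \<Rightarrow> 'b \<Rightarrow> 'a"
    and D :: "nat \<Rightarrow> 'b measure"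
    and f :: "nat \<Rightarrow> 'a \<Rightarrow> real"
    and gf :: "nat \<Rightarrow> 'a \<Rightarrow> 'a"
    and h :: "'a \<Rightarrow> ereal"
    and L \<rho> Bh \<sigma> \<alpha> \<beta> :: real
    and z0 :: 'a and c0 :: "nat \<Rightarrow> 'a"
    and M :: "'m measure"
    and \<xi> :: "nat \<Rightarrow> nat \<Rightarrow> nat \<Rightarrow> nat \<Rightarrow> 'm \<Rightarrow> 'b"
  defines "gradf \<equiv> (\<lambda>x. (1 / real N) *\<^sub>R (\<Sum>i<N. gf i x))"
    and "\<phi> \<equiv> (\<lambda>x. ereal ((1 / real N) * (\<Sum>i<N. f i x)) + h x)"
    and "\<phi>star \<equiv> (INF x. ereal ((1 / real N) * (\<Sum>i<N. f i x)) + h x)"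
    and "\<delta> \<equiv> 1 / (1 - \<alpha> * \<rho>)\<^sup>2"
    and "E0 \<equiv> (1 / real N) * (\<Sum>i<N. (norm (gf i z0 + c0 i - (1 / real N) *\<^sub>R (\<Sum>j<N. gf j z0)))\<^sup>2)"
    and "z \<equiv> (\<lambda>t \<omega>. fst (fedcanon gF h N K B \<alpha> \<beta> z0 c0 (\<lambda>t i k b. \<xi> t i k b \<omega>) t))"
  assumes N: "N > 0" and K: "K > 0" and B: "B > 0" and T: "T \<ge> 1"
    \<comment> \<open>data distributions and component functions f_i = E[F_i]\<close>
    and D_prob: "\<And>i. i < N \<Longrightarrow> prob_space (D i)"
    and F_int: "\<And>i x. i < N \<Longrightarrow> integrable (D i) (F i x)"
    and f_def: "\<And>i x. i < N \<Longrightarrow> f i x = (\<integral>\<xi>'. F i x \<xi>' \<partial>D i)"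
    and F_grad: "\<And>i x \<xi>'. i < N \<Longrightarrow> \<xi>' \<in> space (D i) \<Longrightarrow>
                   ((\<lambda>y. F i y \<xi>') has_derivative (\<lambda>v. inner (gF i x \<xi>') v)) (at x)"
    and gF_meas: "\<And>i. i < N \<Longrightarrow> (\<lambda>(x, \<xi>'). gF i x \<xi>') \<in> borel_measurable (borel \<Otimes>\<^sub>M D i)"
    \<comment> \<open>(A1)\<close>
    and A1: "\<phi>star > -\<infinity>"
    \<comment> \<open>(A2)\<close>
    and L_pos: "L > 0"
    and f_grad: "\<And>i x. i < N \<Longrightarrow> (f i has_derivative (\<lambda>v. inner (gf i x) v)) (at x)"
    and A2_upper: "\<And>i x y. i < N \<Longrightarrow>
                     f i x - f i y - inner (gf i y) (x - y) \<le> L / 2 * (norm (x - y))\<^sup>2"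
    and A2_lip: "\<And>i x y. i < N \<Longrightarrow> norm (gf i x - gf i y) \<le> L * norm (x - y)"
    \<comment> \<open>(A3)\<close>
    and h_proper: "proper_fun h" and h_closed: "closed_fun h"
    and rho: "\<rho> \<ge> 0" and h_wc: "weakly_convex \<rho> h"
    and A3_Bh: "\<And>z' v. v \<in> subdiff h z' \<Longrightarrow> (norm v)\<^sup>2 \<le> Bh"
    \<comment> \<open>(A4): unbiased single-sample gradients with variance at most sigma^2\<close>
    and gF_unbiased: "\<And>i x. i < N \<Longrightarrow> integrable (D i) (gF i x) \<and> (\<integral>\<xi>'. gF i x \<xi>' \<partial>D i) = gf i x"
    and gF_var: "\<And>i x. i < N \<Longrightarrow>
                   (\<integral>\<^sup>+\<xi>'. ennreal ((norm (gF i x \<xi>' - gf i x))\<^sup>2) \<partial>D i) \<le> ennreal (\<sigma>\<^sup>2)"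
    \<comment> \<open>sampling: fresh, mutually independent samples xi_{t,i,k,b} ~ D_i\<close>
    and M_prob: "prob_space M"
    and \<xi>_meas: "\<And>t i k b. i < N \<Longrightarrow> \<xi> t i k b \<in> M \<rightarrow>\<^sub>M D i"
    and \<xi>_distr: "\<And>t i k b. i < N \<Longrightarrow> distr M (D i) (\<xi> t i k b) = D i"
    and \<xi>_indep: "prob_space.indep_vars M (\<lambda>(t, i, k, b). D i) (\<lambda>(t, i, k, b). \<xi> t i k b)
                    {(t, i, k, b). i < N \<and> k < K \<and> b < B}"
    \<comment> \<open>initialisation\<close>
    and c0_sum: "(\<Sum>i<N. c0 i) = 0"
    \<comment> \<open>step sizes\<close>
    and \<alpha>_pos: "\<alpha> > 0" and \<beta>_pos: "\<beta> > 0"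
    and step1: "0 < \<alpha> * (\<rho> + L) + 4 * \<alpha>\<^sup>2 * L\<^sup>2"
    and step2: "\<alpha> * (\<rho> + L) + 4 * \<alpha>\<^sup>2 * L\<^sup>2 \<le> 1 / 2"
    and step3: "192 * (6 + \<delta>) * \<beta>\<^sup>2 * (real K)\<^sup>2 * L\<^sup>2 \<le> 1"
  shows "ereal (1 / real T) *
           (\<Sum>t<T. enn2ereal (\<integral>\<^sup>+\<omega>. ennreal ((norm (Gmap h \<alpha> (z t \<omega>) (gradf (z t \<omega>))))\<^sup>2) \<partial>M))
         \<le> ereal (8 / (\<alpha> * real T)) * (\<phi> z0 - \<phi>star + ereal (\<alpha> * E0))
           + ereal (50 * \<sigma>\<^sup>2 / (real B * real K) + \<sigma>\<^sup>2 / (8 * real B) + Bh)"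
proof -
  define fbar where "fbar x = (1 / real N) * (\<Sum>i<N. f i x)" for x
  obtain m where m: "\<phi>star = ereal m" and h_ge: "\<And>x. ereal (m - fbar x) \<le> h x"
    using INF_add_finite[OF h_proper A1[unfolded \<phi>star_def]] unfolding \<phi>star_def fbar_def by blast
  note steps = step_size_consequences[OF \<alpha>_pos L_pos rho step2 step3[unfolded \<delta>_def]]
  have "fedcanon_path h \<rho> \<alpha> L m fbar gradf N K gf \<beta> Bh c0"
  proof (intro fedcanon_path.intro prox_setting.intro fedcanon_path_axioms.intro)
    show "fbar x \<le> fbar y + inner (gradf y) (x - y) + L / 2 * (norm (x - y))\<^sup>2" for x y
      unfolding fbar_def gradf_def by (rule mean_descent_inequality[OF N A2_upper])
  qed (use h_proper h_closed h_wc \<alpha>_pos \<beta>_pos rho L_pos steps h_ge N K A2_lip A3_Bh step2 c0_sum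
       in \<open>simp_all add: gradf_def\<close>)
  then interpret fedcanon_stochastic h \<rho> \<alpha> L m fbar gradf N K B gf gF \<beta> Bh z0 c0 T \<sigma> D M \<xi>
    by (intro fedcanon_stochastic.intro fedcanon_sampling.intro fedcanon_stochastic_axioms.intro)
       (use B T D_prob gF_meas gF_unbiased gF_var M_prob \<xi>_meas \<xi>_distr \<xi>_indep in auto)
  show ?thesis
    using mean_expected_pgrad_sq_le unfolding \<phi>_def m E0_def z_def fbar_def gradf_def by simp
qed

end
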